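(* Let a topological group $G$ act continuously on a space $X$ such that $X/G$ is connected. Suppose every $x\in X$ is contained in a constant slice $(S,\mathrm{Stab}_x(G))$. Then the conjugacy class of $\Gamma:=\mathrm{Stab}_x(G)$ is independent of $x$, and the comparison map $X/\!\!/G\to X/G$ is a fibre bundle with fibre $B\Gamma$.
   Context: For an action $G\curvearrowright X$, a pair $(S,\Gamma)$ with $S\subseteq X$ a subspace and $\Gamma\le G$ a subgroup is a slice if: (SL1) $g\cdot S\subseteq S$ for all $g\in\Gamma$; (SL2) if $g\cdot S\cap S\neq\emptyset$ then $g\in\Gamma$; (SL3) $G\to G/\Gamma$ is a principal $\Gamma$-bundle and there is a local section $\chi\colon U\to G$ defined on a neighbourhood $U$ of the identity coset such that $U\times S\to X$, $([u],s)\mapsto\chi([u])\cdot s$, is an open embedding. A slice is constant if $\Gamma$ acts trivially on $S$. $\mathrm{Stab}_x(G)=\{g\in G: g x=x\}$. The homotopy quotient is $X/\!\!/G:=(EG\times X)/G$ with diagonal action ($EG\to BG$ the universal principal $G$-bundle), and the comparison map $X/\!\!/G\to X/G$ is induced by projection to $X$. *)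

theory Defs
  imports "HOL-Analysis.Analysis" "HOL-Algebra.Coset"
begin

definition quotient_topology :: "'a topology \<Rightarrow> ('a \<Rightarrow> 'b) \<Rightarrow> 'b topology" where
  "quotient_topology X q =
     topology (\<lambda>U. U \<subseteq> q ` topspace X \<and> openin X {x \<in> topspace X. q x \<in> U})"

lemma istopology_quotient:
  "istopology (\<lambda>U. U \<subseteq> q ` topspace X \<and> openin X {x \<in> topspace X. q x \<in> U})"
proof -
  have 1: "\<And>S T. {x \<in> topspace X. q x \<in> S \<inter> T} = {x \<in> topspace X. q x \<in> S} \<inter> {x \<in> topspace X. q x \<in> T}"
    by auto
  have 2: "\<And>K. {x \<in> topspace X. q x \<in> \<Union>K} = (\<Union>S\<in>K. {x \<in> topspace X. q x \<in> S})"
    by auto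
  show ?thesis unfolding istopology_def
    by (auto simp only: 1 2 intro!: openin_Int openin_Union)
qed

definition topological_group :: "'g monoid \<Rightarrow> 'g topology \<Rightarrow> bool" where
  "topological_group G TG \<longleftrightarrow> group G \<and> topspace TG = carrier G \<and>
     continuous_map (prod_topology TG TG) TG (\<lambda>(a, b). a \<otimes>\<^bsub>G\<^esub> b) \<and>
     continuous_map TG TG (\<lambda>a. inv\<^bsub>G\<^esub> a)"

definition continuous_action ::
  "'g monoid \<Rightarrow> 'g topology \<Rightarrow> 'x topology \<Rightarrow> ('g \<Rightarrow> 'x \<Rightarrow> 'x) \<Rightarrow> bool" where
  "continuous_action G TG X act \<longleftrightarrow>
     topological_group G TG \<and>
     (\<forall>x\<in>topspace X. act \<one>\<^bsub>G\<^esub> x = x) \<and>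
     (\<forall>g\<in>carrier G. \<forall>h\<in>carrier G. \<forall>x\<in>topspace X. act (g \<otimes>\<^bsub>G\<^esub> h) x = act g (act h x)) \<and>
     continuous_map (prod_topology TG X) X (\<lambda>(g, x). act g x)"

definition orbit :: "'g monoid \<Rightarrow> ('g \<Rightarrow> 'x \<Rightarrow> 'x) \<Rightarrow> 'x \<Rightarrow> 'x set" where
  "orbit G act x = {act g x | g. g \<in> carrier G}"

definition orbit_space :: "'g monoid \<Rightarrow> 'x topology \<Rightarrow> ('g \<Rightarrow> 'x \<Rightarrow> 'x) \<Rightarrow> 'x set topology" where
  "orbit_space G X act = quotient_topology X (orbit G act)"

definition Stab :: "'g monoid \<Rightarrow> ('g \<Rightarrow> 'x \<Rightarrow> 'x) \<Rightarrow> 'x \<Rightarrow> 'g set" where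
  "Stab G act x = {g \<in> carrier G. act g x = x}"

abbreviation subgrp :: "'g monoid \<Rightarrow> 'g set \<Rightarrow> 'g monoid" where
  "subgrp G H \<equiv> G\<lparr>carrier := H\<rparr>"

definition principal_bundle ::
  "'g monoid \<Rightarrow> 'g topology \<Rightarrow> 'e topology \<Rightarrow> ('g \<Rightarrow> 'e \<Rightarrow> 'e) \<Rightarrow> 'b topology \<Rightarrow> ('e \<Rightarrow> 'b) \<Rightarrow> bool"
  where
  "principal_bundle G TG E a B p \<longleftrightarrow>
     continuous_action G TG E a \<and>
     continuous_map E B p \<and> p ` topspace E = topspace B \<and>
     (\<forall>g\<in>carrier G. \<forall>e\<in>topspace E. p (a g e) = p e) \<and>
     (\<forall>b\<in>topspace B. \<exists>U \<phi>. openin B U \<and> b \<in> U \<and>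
        homeomorphic_map (prod_topology (subtopology B U) TG)
                         (subtopology E {e \<in> topspace E. p e \<in> U}) \<phi> \<and>
        (\<forall>u\<in>U. \<forall>g\<in>carrier G. p (\<phi> (u, g)) = u \<and>
            (\<forall>h\<in>carrier G. \<phi> (u, h \<otimes>\<^bsub>G\<^esub> g) = a h (\<phi> (u, g)))))"

definition universal_bundle ::
  "'g monoid \<Rightarrow> 'g topology \<Rightarrow> 'e topology \<Rightarrow> ('g \<Rightarrow> 'e \<Rightarrow> 'e) \<Rightarrow> bool" where
  "universal_bundle G TG E a \<longleftrightarrow>
     topspace E \<noteq> {} \<and> contractible_space E \<and>
     principal_bundle G TG E a (orbit_space G E a) (orbit G a)"

definition classifying_space_model ::
  "'g monoid \<Rightarrow> 'g topology \<Rightarrow> 'g set \<Rightarrow> 'e set topology \<Rightarrow> bool" where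
  "classifying_space_model G TG \<Gamma> F \<longleftrightarrow>
     (\<exists>(E :: 'e topology) a. universal_bundle (subgrp G \<Gamma>) (subtopology TG \<Gamma>) E a \<and>
                             F = orbit_space (subgrp G \<Gamma>) E a)"

definition fibre_bundle :: "'y topology \<Rightarrow> 'b topology \<Rightarrow> ('y \<Rightarrow> 'b) \<Rightarrow> 'f topology \<Rightarrow> bool" where
  "fibre_bundle Y B p F \<longleftrightarrow>
     continuous_map Y B p \<and> p ` topspace Y = topspace B \<and>
     (\<forall>b\<in>topspace B. \<exists>U \<phi>. openin B U \<and> b \<in> U \<and>
        homeomorphic_map (subtopology Y {y \<in> topspace Y. p y \<in> U})
                         (prod_topology (subtopology B U) F) \<phi> \<and>
        (\<forall>y\<in>topspace Y. p y \<in> U \<longrightarrow> fst (\<phi> y) = p y))"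

definition coset_space :: "'g monoid \<Rightarrow> 'g topology \<Rightarrow> 'g set \<Rightarrow> 'g set topology" where
  "coset_space G TG \<Gamma> = quotient_topology TG (\<lambda>g. g <#\<^bsub>G\<^esub> \<Gamma>)"

definition slice ::
  "'g monoid \<Rightarrow> 'g topology \<Rightarrow> 'x topology \<Rightarrow> ('g \<Rightarrow> 'x \<Rightarrow> 'x) \<Rightarrow> 'x set \<Rightarrow> 'g set \<Rightarrow> bool" where
  "slice G TG X act S \<Gamma> \<longleftrightarrow>
     S \<subseteq> topspace X \<and> subgroup \<Gamma> G \<and>
     \<comment> \<open>SL1\<close>
     (\<forall>g\<in>\<Gamma>. act g ` S \<subseteq> S) \<and>
     \<comment> \<open>SL2\<close>
     (\<forall>g\<in>carrier G. act g ` S \<inter> S \<noteq> {} \<longrightarrow> g \<in> \<Gamma>) \<and>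
     \<comment> \<open>SL3: G \<rightarrow> G/\<Gamma> is a principal \<Gamma>-bundle (\<Gamma> acting by right multiplication),
        and there is a local section sec near the identity coset giving an open embedding\<close>
     principal_bundle (subgrp G \<Gamma>) (subtopology TG \<Gamma>) TG (\<lambda>h g. g \<otimes>\<^bsub>G\<^esub> inv\<^bsub>G\<^esub> h)
        (coset_space G TG \<Gamma>) (\<lambda>g. g <#\<^bsub>G\<^esub> \<Gamma>) \<and>
     (\<exists>U sec. openin (coset_space G TG \<Gamma>) U \<and> \<Gamma> \<in> U \<and>
        continuous_map (subtopology (coset_space G TG \<Gamma>) U) TG sec \<and>
        (\<forall>c\<in>U. sec c <#\<^bsub>G\<^esub> \<Gamma> = c) \<and>
        embedding_map (prod_topology (subtopology (coset_space G TG \<Gamma>) U) (subtopology X S)) X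
                      (\<lambda>(c, s). act (sec c) s) \<and>
        open_map (prod_topology (subtopology (coset_space G TG \<Gamma>) U) (subtopology X S)) X
                 (\<lambda>(c, s). act (sec c) s))"

definition constant_slice ::
  "'g monoid \<Rightarrow> 'g topology \<Rightarrow> 'x topology \<Rightarrow> ('g \<Rightarrow> 'x \<Rightarrow> 'x) \<Rightarrow> 'x set \<Rightarrow> 'g set \<Rightarrow> bool" where
  "constant_slice G TG X act S \<Gamma> \<longleftrightarrow>
     slice G TG X act S \<Gamma> \<and> (\<forall>g\<in>\<Gamma>. \<forall>s\<in>S. act g s = s)"

definition diag_action :: "('g \<Rightarrow> 'e \<Rightarrow> 'e) \<Rightarrow> ('g \<Rightarrow> 'x \<Rightarrow> 'x) \<Rightarrow> 'g \<Rightarrow> 'e \<times> 'x \<Rightarrow> 'e \<times> 'x" where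
  "diag_action aE act g = (\<lambda>(e, x). (aE g e, act g x))"

definition homotopy_quotient ::
  "'g monoid \<Rightarrow> 'e topology \<Rightarrow> ('g \<Rightarrow> 'e \<Rightarrow> 'e) \<Rightarrow> 'x topology \<Rightarrow> ('g \<Rightarrow> 'x \<Rightarrow> 'x)
     \<Rightarrow> ('e \<times> 'x) set topology" where
  "homotopy_quotient G EG aE X act = orbit_space G (prod_topology EG X) (diag_action aE act)"

text \<open>The comparison map X//G \<rightarrow> X/G induced by the projection EG \<times> X \<rightarrow> X:
  the G-orbit of (e,x) is sent to snd ` (its orbit) = the G-orbit of x.\<close>

definition comparison_map :: "('e \<times> 'x) set \<Rightarrow> 'x set" where
  "comparison_map C = snd ` C"

end

(* A constant slice (S, Gamma) at x gives the open, G-saturated set G S, on which every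
   stabiliser is conjugate to Gamma = Stab x. Hence the conjugacy class of the stabiliser is
   locally constant on X/G, and therefore constant since X/G is connected.

   Since Gamma fixes S pointwise, G S is G x_Gamma S = G/Gamma x S, and over it the homotopy
   quotient EG x_G (G S) is (EG/Gamma) x S, while (G S)/G is S: this is a local trivialisation
   of the comparison map with fibre EG/Gamma. Finally EG/Gamma is a B Gamma, because
   G -> G/Gamma being a principal Gamma-bundle makes EG -> EG/Gamma a principal Gamma-bundle
   as well, with the same contractible total space. *)

theory Submission
  imports Defs
begin

section \<open>Quotient maps\<close>

lemma openin_quotient_topology:
  "openin (quotient_topology X q) U \<longleftrightarrow> U \<subseteq> q ` topspace X \<and> openin X {x \<in> topspace X. q x \<in> U}"
  unfolding quotient_topology_def using istopology_quotient[of q X] by simp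

lemma topspace_quotient_topology: "topspace (quotient_topology X q) = q ` topspace X"
proof
  show "topspace (quotient_topology X q) \<subseteq> q ` topspace X"
    using openin_topspace[of "quotient_topology X q"] unfolding openin_quotient_topology by blast
  have "{x \<in> topspace X. q x \<in> q ` topspace X} = topspace X" by auto
  then have "openin (quotient_topology X q) (q ` topspace X)"
    by (simp add: openin_quotient_topology)
  then show "q ` topspace X \<subseteq> topspace (quotient_topology X q)"
    by (rule openin_subset)
qed

lemma quotient_map_quotient_topology: "quotient_map X (quotient_topology X q) q"
  unfolding quotient_map_def topspace_quotient_topology openin_quotient_topology by blast

lemma continuous_map_quotient_topology: "continuous_map X (quotient_topology X q) q"
  by (rule quotient_imp_continuous_map[OF quotient_map_quotient_topology])

lemma continuous_map_from_quotient_topology_on_saturated: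
  assumes V: "openin X V" and sat: "\<And>x. x \<in> topspace X \<Longrightarrow> q x \<in> q ` V \<Longrightarrow> x \<in> V"
    and f: "continuous_map (subtopology X V) Z (f \<circ> q)"
  shows "continuous_map (subtopology (quotient_topology X q) (q ` V)) Z f"
proof -
  have pre: "{x \<in> topspace X. q x \<in> q ` V} = V"
    using sat openin_subset[OF V] by auto
  have "openin (quotient_topology X q) (q ` V)"
    unfolding openin_quotient_topology pre using V openin_subset[OF V] by auto
  then have "quotient_map (subtopology X V) (subtopology (quotient_topology X q) (q ` V)) q"
    using quotient_map_restriction[OF quotient_map_quotient_topology pre] by blast
  then show ?thesis
    using f continuous_compose_quotient_map continuous_map_in_subtopology by blast
qed

lemma continuous_map_fst_of':
  "continuous_map Z (prod_topology X Y) f \<Longrightarrow> continuous_map Z X (\<lambda>z. fst (f z))"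
  using continuous_map_fst_of[of Z X Y f] by (simp add: o_def)

lemma continuous_map_snd_of':
  "continuous_map Z (prod_topology X Y) f \<Longrightarrow> continuous_map Z Y (\<lambda>z. snd (f z))"
  using continuous_map_snd_of[of Z X Y f] by (simp add: o_def)

lemma continuous_map_compose':
  "continuous_map Z X f \<Longrightarrow> continuous_map X Y g \<Longrightarrow> continuous_map Z Y (\<lambda>z. g (f z))"
  using continuous_map_compose[of Z X f Y g] by (simp add: o_def)

lemma homeomorphic_maps_apply:
  assumes "homeomorphic_maps X Y f g" "topspace X = A" "topspace Y = B" "x \<in> A"
  shows "f x \<in> B" "g (f x) = x"
  using assms unfolding homeomorphic_maps_def continuous_map_def by auto

lemma continuous_map_locally:
  assumes "\<And>x. x \<in> topspace X \<Longrightarrow> \<exists>T. openin X T \<and> x \<in> T \<and> continuous_map (subtopology X T) Y f"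
  shows "continuous_map X Y f"
proof -
  obtain T where T: "\<And>x. x \<in> topspace X \<Longrightarrow> openin X (T x) \<and> x \<in> T x \<and> continuous_map (subtopology X (T x)) Y f"
    using assms by metis
  show ?thesis
    by (rule pasting_lemma[where I="topspace X" and T=T and f="\<lambda>_. f"]) (use T in blast)+
qed

lemma open_map_prod_right:
  assumes "open_map X Q q"
  shows "open_map (prod_topology Z X) (prod_topology Z Q) (\<lambda>(z, x). (z, q x))"
  unfolding open_map_def openin_prod_topology_alt
proof (intro allI impI)
  fix A z y
  assume A: "\<forall>z x. (z, x) \<in> A \<longrightarrow> (\<exists>U V. openin Z U \<and> openin X V \<and> z \<in> U \<and> x \<in> V \<and> U \<times> V \<subseteq> A)"
    and zy: "(z, y) \<in> (\<lambda>(z, x). (z, q x)) ` A"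
  then obtain x where "(z, x) \<in> A" and y: "y = q x" by auto
  with A obtain U V where UV: "openin Z U" "openin X V" "z \<in> U" "x \<in> V" "U \<times> V \<subseteq> A"
    by meson
  have "U \<times> q ` V \<subseteq> (\<lambda>(z, x). (z, q x)) ` A"
    using UV(5) by (force simp: image_iff)
  moreover have "openin Q (q ` V)" using assms UV(2) unfolding open_map_def by blast
  ultimately show "\<exists>U V. openin Z U \<and> openin Q V \<and> z \<in> U \<and> y \<in> V \<and> U \<times> V \<subseteq> (\<lambda>(z, x). (z, q x)) ` A"
    using UV y by blast
qed

lemma quotient_map_prod_right_open:
  assumes "continuous_map X Q q" "open_map X Q q" "q ` topspace X = topspace Q"
  shows "quotient_map (prod_topology Z X) (prod_topology Z Q) (\<lambda>(z, x). (z, q x))"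
proof (rule continuous_open_imp_quotient_map)
  show "continuous_map (prod_topology Z X) (prod_topology Z Q) (\<lambda>(z, x). (z, q x))"
    using continuous_map_compose[OF continuous_map_snd assms(1)]
    by (simp add: case_prod_unfold continuous_map_paired continuous_map_fst o_def)
  show "open_map (prod_topology Z X) (prod_topology Z Q) (\<lambda>(z, x). (z, q x))"
    using assms(2) by (rule open_map_prod_right)
  show "(\<lambda>(z, x). (z, q x)) ` topspace (prod_topology Z X) = topspace (prod_topology Z Q)"
    using assms(3) by (force simp: topspace_prod_topology image_iff)
qed

section \<open>Continuous group actions\<close>

context group
begin

lemma conj_image_comp:
  assumes "g \<in> carrier G" "k \<in> carrier G" "H \<subseteq> carrier G"
  shows "(\<lambda>h. g \<otimes> h \<otimes> inv g) ` (\<lambda>h. k \<otimes> h \<otimes> inv k) ` H = (\<lambda>h. (g \<otimes> k) \<otimes> h \<otimes> inv (g \<otimes> k)) ` H"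
proof -
  have "g \<otimes> (k \<otimes> h \<otimes> inv k) \<otimes> inv g = (g \<otimes> k) \<otimes> h \<otimes> inv (g \<otimes> k)" if "h \<in> H" for h
    using assms that by (auto simp: inv_mult_group m_assoc)
  then show ?thesis by (auto simp: image_image image_iff)
qed

lemma conj_image_inv:
  assumes "g \<in> carrier G" "H \<subseteq> carrier G"
  shows "(\<lambda>h. inv g \<otimes> h \<otimes> inv (inv g)) ` (\<lambda>h. g \<otimes> h \<otimes> inv g) ` H = H"
  using conj_image_comp[of "inv g" g H] assms by (simp add: image_iff subset_iff)

lemma conj_image_one: "H \<subseteq> carrier G \<Longrightarrow> (\<lambda>h. \<one> \<otimes> h \<otimes> inv \<one>) ` H = H"
  by (auto simp: image_iff subsetD)

lemma l_coset_eq_iff: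
  assumes H: "subgroup H G" and a: "a \<in> carrier G" and b: "b \<in> carrier G"
  shows "a <# H = b <# H \<longleftrightarrow> inv a \<otimes> b \<in> H"
proof
  assume "a <# H = b <# H"
  moreover have "b \<in> b <# H"
    using H b unfolding l_coset_def by (force intro: subgroup.one_closed)
  ultimately obtain h where "h \<in> H" "b = a \<otimes> h" unfolding l_coset_def by auto
  then show "inv a \<otimes> b \<in> H"
    using a subgroup.mem_carrier[OF H] by (simp add: m_assoc[symmetric])
next
  assume "inv a \<otimes> b \<in> H"
  then have "b \<in> a <# H" by (rule subgroup.lcos_module_rev[OF H is_group a b])
  then show "a <# H = b <# H" using l_repr_independence[OF _ a H] by blast
qed

end

locale top_action =
  fixes G (structure) and TG :: "'g topology" and X :: "'x topology" and act :: "'g \<Rightarrow> 'x \<Rightarrow> 'x"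
  assumes continuous_action: "continuous_action G TG X act"
begin

lemma topological_group: "topological_group G TG"
  using continuous_action unfolding continuous_action_def by blast

sublocale group G
  using topological_group unfolding topological_group_def by blast

lemma topspace_group: "topspace TG = carrier G"
  using topological_group unfolding topological_group_def by blast

lemma act_one: "x \<in> topspace X \<Longrightarrow> act \<one> x = x"
  using continuous_action unfolding continuous_action_def by blast

lemma act_mult:
  "g \<in> carrier G \<Longrightarrow> h \<in> carrier G \<Longrightarrow> x \<in> topspace X \<Longrightarrow> act (g \<otimes> h) x = act g (act h x)"
  using continuous_action unfolding continuous_action_def by blast

lemma continuous_map_act_paired:
  assumes "continuous_map Z TG a" "continuous_map Z X b"
  shows "continuous_map Z X (\<lambda>z. act (a z) (b z))"
proof -
  have "continuous_map (prod_topology TG X) X (\<lambda>(g, x). act g x)"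
    using continuous_action unfolding continuous_action_def by blast
  from continuous_map_compose'[OF continuous_map_pairedI[OF assms] this] show ?thesis by simp
qed

lemma continuous_map_mult_paired:
  assumes "continuous_map Z TG a" "continuous_map Z TG b"
  shows "continuous_map Z TG (\<lambda>z. a z \<otimes> b z)"
proof -
  have "continuous_map (prod_topology TG TG) TG (\<lambda>(a, b). a \<otimes> b)"
    using topological_group unfolding topological_group_def by blast
  from continuous_map_compose'[OF continuous_map_pairedI[OF assms] this] show ?thesis by simp
qed

lemma continuous_map_inv_of:
  assumes "continuous_map Z TG a"
  shows "continuous_map Z TG (\<lambda>z. inv (a z))"
  using topological_group assms unfolding topological_group_def
  by (blast intro: continuous_map_compose')

lemma continuous_map_const_group: "g \<in> carrier G \<Longrightarrow> continuous_map Z TG (\<lambda>_. g)"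
  by (simp add: topspace_group)

lemma continuous_map_act: "g \<in> carrier G \<Longrightarrow> continuous_map X X (act g)"
  using continuous_map_act_paired[OF continuous_map_const_group continuous_map_id[unfolded id_def]] .

lemma act_closed: "g \<in> carrier G \<Longrightarrow> x \<in> topspace X \<Longrightarrow> act g x \<in> topspace X"
  using continuous_map_image_subset_topspace[OF continuous_map_act] by blast

lemma act_inv_act: "g \<in> carrier G \<Longrightarrow> x \<in> topspace X \<Longrightarrow> act (inv g) (act g x) = x"
  using act_mult[of "inv g" g x] act_one by simp

lemma act_act_inv: "g \<in> carrier G \<Longrightarrow> x \<in> topspace X \<Longrightarrow> act g (act (inv g) x) = x"
  using act_mult[of g "inv g" x] act_one by simp

lemma openin_act_image:
  assumes "g \<in> carrier G" "openin X V"
  shows "openin X (act g ` V)"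
proof -
  have "homeomorphic_maps X X (act g) (act (inv g))"
    unfolding homeomorphic_maps_def using assms continuous_map_act act_inv_act act_act_inv by simp
  then have "open_map X X (act g)"
    by (blast intro: homeomorphic_imp_open_map homeomorphic_maps_imp_map)
  with assms show ?thesis unfolding open_map_def by blast
qed

lemma mem_orbit_iff: "y \<in> orbit G act x \<longleftrightarrow> (\<exists>g\<in>carrier G. y = act g x)"
  unfolding orbit_def by auto

lemma orbit_self: "x \<in> topspace X \<Longrightarrow> x \<in> orbit G act x"
  unfolding mem_orbit_iff using act_one by (metis one_closed)

lemma orbit_act:
  assumes g: "g \<in> carrier G" and x: "x \<in> topspace X"
  shows "orbit G act (act g x) = orbit G act x"
proof
  show "orbit G act (act g x) \<subseteq> orbit G act x"
  proof
    fix y assume "y \<in> orbit G act (act g x)"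
    then obtain h where "h \<in> carrier G" "y = act h (act g x)" unfolding mem_orbit_iff by blast
    then show "y \<in> orbit G act x" unfolding mem_orbit_iff using g x act_mult by (metis m_closed)
  qed
  show "orbit G act x \<subseteq> orbit G act (act g x)"
  proof
    fix y assume "y \<in> orbit G act x"
    then obtain h where h: "h \<in> carrier G" "y = act h x" unfolding mem_orbit_iff by blast
    then have "y = act (h \<otimes> inv g) (act g x)" using g x by (simp add: act_mult act_closed act_inv_act)
    then show "y \<in> orbit G act (act g x)" unfolding mem_orbit_iff using g h by (metis inv_closed m_closed)
  qed
qed

lemma orbit_eq_iff:
  assumes x: "x \<in> topspace X" and y: "y \<in> topspace X"
  shows "orbit G act x = orbit G act y \<longleftrightarrow> (\<exists>g\<in>carrier G. y = act g x)"
proof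
  assume "orbit G act x = orbit G act y"
  then show "\<exists>g\<in>carrier G. y = act g x" using orbit_self[OF y] mem_orbit_iff by blast
qed (use orbit_act x in auto)

lemma topspace_orbit_space: "topspace (orbit_space G X act) = orbit G act ` topspace X"
  unfolding orbit_space_def by (rule topspace_quotient_topology)

lemma continuous_map_orbit: "continuous_map X (orbit_space G X act) (orbit G act)"
  unfolding orbit_space_def by (rule continuous_map_quotient_topology)

lemma orbit_saturation:
  assumes V: "V \<subseteq> topspace X"
  shows "{x \<in> topspace X. orbit G act x \<in> orbit G act ` V} = (\<Union>g\<in>carrier G. act g ` V)"
proof (intro equalityI subsetI)
  fix x assume "x \<in> {x \<in> topspace X. orbit G act x \<in> orbit G act ` V}"
  then obtain v where "v \<in> V" "x \<in> topspace X" "orbit G act v = orbit G act x" by auto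
  then show "x \<in> (\<Union>g\<in>carrier G. act g ` V)" using orbit_eq_iff[of v x] V by auto
next
  fix x assume "x \<in> (\<Union>g\<in>carrier G. act g ` V)"
  then obtain g v where "g \<in> carrier G" "v \<in> V" "x = act g v" by auto
  then show "x \<in> {x \<in> topspace X. orbit G act x \<in> orbit G act ` V}"
    using V act_closed orbit_act by auto
qed

lemma openin_orbit_image:
  assumes "openin X V"
  shows "openin (orbit_space G X act) (orbit G act ` V)"
  unfolding orbit_space_def openin_quotient_topology
  using assms openin_subset[OF assms] orbit_saturation openin_act_image by auto

lemma open_map_orbit: "open_map X (orbit_space G X act) (orbit G act)"
  unfolding open_map_def using openin_orbit_image by blast

lemma Stab_subset: "Stab G act x \<subseteq> carrier G"
  unfolding Stab_def by auto

lemma Stab_subgroup: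
  assumes "x \<in> topspace X"
  shows "subgroup (Stab G act x) G"
proof
  show "\<one> \<in> Stab G act x" unfolding Stab_def using act_one assms by auto
  fix g h assume "g \<in> Stab G act x" "h \<in> Stab G act x"
  then show "g \<otimes> h \<in> Stab G act x" unfolding Stab_def using act_mult assms by auto
next
  fix g assume "g \<in> Stab G act x"
  then show "inv g \<in> Stab G act x" unfolding Stab_def using act_inv_act[of g x] assms by auto
qed (rule Stab_subset)

lemma Stab_act:
  assumes g: "g \<in> carrier G" and x: "x \<in> topspace X"
  shows "Stab G act (act g x) = (\<lambda>h. g \<otimes> h \<otimes> inv g) ` Stab G act x"
proof
  show "Stab G act (act g x) \<subseteq> (\<lambda>h. g \<otimes> h \<otimes> inv g) ` Stab G act x"
  proof
    fix k assume "k \<in> Stab G act (act g x)"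
    then have k: "k \<in> carrier G" "act k (act g x) = act g x" unfolding Stab_def by auto
    have "act (inv g \<otimes> k \<otimes> g) x = act (inv g) (act k (act g x))"
      using g x k act_mult act_closed by simp
    also have "\<dots> = x" using k act_inv_act g x by simp
    finally have "inv g \<otimes> k \<otimes> g \<in> Stab G act x" unfolding Stab_def using g k by simp
    moreover have "k = g \<otimes> (inv g \<otimes> k \<otimes> g) \<otimes> inv g"
      using g k by (simp add: m_assoc[symmetric]) (simp add: m_assoc)
    ultimately show "k \<in> (\<lambda>h. g \<otimes> h \<otimes> inv g) ` Stab G act x" by (rule rev_image_eqI)
  qed
  show "(\<lambda>h. g \<otimes> h \<otimes> inv g) ` Stab G act x \<subseteq> Stab G act (act g x)"
  proof
    fix k assume "k \<in> (\<lambda>h. g \<otimes> h \<otimes> inv g) ` Stab G act x"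
    then obtain h where h: "h \<in> carrier G" "act h x = x" "k = g \<otimes> h \<otimes> inv g"
      unfolding Stab_def by auto
    have "act k (act g x) = act g (act h (act (inv g) (act g x)))"
      using g h x act_mult act_closed by simp
    also have "\<dots> = act g x" using act_inv_act g x h by simp
    finally show "k \<in> Stab G act (act g x)" unfolding Stab_def using g h by simp
  qed
qed

lemma top_action_subgroup:
  assumes H: "subgroup H G"
  shows "top_action (subgrp G H) (subtopology TG H) X act"
proof -
  have Hc: "H \<subseteq> carrier G" using H by (rule subgroup.subset)
  have tsH: "topspace (subtopology TG H) = H" using Hc topspace_group by auto
  have "continuous_map (prod_topology TG TG) TG (\<lambda>(a, b). a \<otimes> b)"
    using topological_group unfolding topological_group_def by blast
  then have "continuous_map (prod_topology (subtopology TG H) (subtopology TG H)) TG (\<lambda>(a, b). a \<otimes> b)"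
    using continuous_map_from_subtopology[of "prod_topology TG TG" TG _ "H \<times> H"]
    by (simp add: subtopology_Times)
  then have mult: "continuous_map (prod_topology (subtopology TG H) (subtopology TG H)) (subtopology TG H)
              (\<lambda>(a, b). a \<otimes>\<^bsub>subgrp G H\<^esub> b)"
    using H by (auto simp: continuous_map_in_subtopology subgroup.m_closed)
  have "continuous_map (subtopology TG H) (subtopology TG H) (\<lambda>a. inv a)"
    unfolding continuous_map_in_subtopology
    using continuous_map_from_subtopology[OF continuous_map_inv_of[OF continuous_map_id[unfolded id_def]]]
      H tsH by (auto simp: subgroup.m_inv_closed)
  then have inv: "continuous_map (subtopology TG H) (subtopology TG H) (\<lambda>a. inv\<^bsub>subgrp G H\<^esub> a)"
    by (rule continuous_map_eq) (use H tsH in simp)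
  have grp: "group (subgrp G H)" using H by (rule subgroup.subgroup_is_group) (rule is_group)
  have "continuous_map (prod_topology TG X) X (\<lambda>(g, x). act g x)"
    using continuous_action unfolding continuous_action_def by blast
  then have "continuous_map (prod_topology (subtopology TG H) X) X (\<lambda>(g, x). act g x)"
    using continuous_map_from_subtopology[of "prod_topology TG X" X _ "H \<times> topspace X"]
    by (simp add: subtopology_Times)
  then show ?thesis
    unfolding top_action_def continuous_action_def topological_group_def
    using grp tsH mult inv act_one Hc by (auto intro!: act_mult)
qed

end

lemma top_action_diag:
  assumes "top_action G TG E aE" "top_action G TG X act"
  shows "top_action G TG (prod_topology E X) (diag_action aE act)"
proof -
  interpret E: top_action G TG E aE by fact
  interpret A: top_action G TG X act by fact
  have "continuous_map (prod_topology TG (prod_topology E X)) (prod_topology E X)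
          (\<lambda>q. (aE (fst q) (fst (snd q)), act (fst q) (snd (snd q))))"
    by (intro continuous_map_pairedI E.continuous_map_act_paired A.continuous_map_act_paired
          continuous_map_fst continuous_map_fst_of'[OF continuous_map_snd]
          continuous_map_snd_of'[OF continuous_map_snd])
  then have "continuous_map (prod_topology TG (prod_topology E X)) (prod_topology E X)
          (\<lambda>(g, p). diag_action aE act g p)"
    by (rule continuous_map_eq) (auto simp: diag_action_def case_prod_unfold)
  then show ?thesis
    unfolding top_action_def continuous_action_def
    using E.topological_group
    by (auto simp: diag_action_def[abs_def] E.act_one A.act_one E.act_mult A.act_mult
        topspace_prod_topology)
qed

section \<open>Restricting a universal bundle to a subgroup\<close>

locale restricted_chart = E: top_action G TG EG aE
  for G (structure) and TG :: "'g topology" and EG :: "'e topology" and aE +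
  fixes \<Gamma> :: "'g set" and U :: "'e set set" and \<phi> :: "'e set \<times> 'g \<Rightarrow> 'e" and \<phi>'
    and V :: "'g set set" and \<psi> :: "'g set \<times> 'g \<Rightarrow> 'g" and \<psi>'
  assumes subgroup: "subgroup \<Gamma> G"
    and U: "openin (orbit_space G EG aE) U"
    and \<phi>: "homeomorphic_maps (prod_topology (subtopology (orbit_space G EG aE) U) TG)
              (subtopology EG {e \<in> topspace EG. orbit G aE e \<in> U}) \<phi> \<phi>'"
    and \<phi>_equivariant:
      "\<And>u g h. u \<in> U \<Longrightarrow> g \<in> carrier G \<Longrightarrow> h \<in> carrier G \<Longrightarrow> \<phi> (u, h \<otimes> g) = aE h (\<phi> (u, g))"
    and V: "openin (coset_space G TG \<Gamma>) V"
    and \<psi>: "homeomorphic_maps (prod_topology (subtopology (coset_space G TG \<Gamma>) V) (subtopology TG \<Gamma>))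
              (subtopology TG {g \<in> topspace TG. g <# \<Gamma> \<in> V}) \<psi> \<psi>'"
    and \<psi>_coset: "\<And>v \<gamma>. v \<in> V \<Longrightarrow> \<gamma> \<in> \<Gamma> \<Longrightarrow> \<psi> (v, \<gamma>) <# \<Gamma> = v"
    and \<psi>_equivariant:
      "\<And>v \<gamma> h. v \<in> V \<Longrightarrow> \<gamma> \<in> \<Gamma> \<Longrightarrow> h \<in> \<Gamma> \<Longrightarrow> \<psi> (v, h \<otimes> \<gamma>) = \<psi> (v, \<gamma>) \<otimes> inv h"
begin

sublocale R: top_action "subgrp G \<Gamma>" "subtopology TG \<Gamma>" EG aE
  by (rule E.top_action_subgroup[OF subgroup])

lemma \<Gamma>_subset: "\<Gamma> \<subseteq> carrier G"
  using subgroup by (rule subgroup.subset)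

text \<open>A point y = \<phi> (u, g) lies over the coset g\<inverse>\<Gamma> of G/\<Gamma>, and the tube consists of the
  points lying over V. Its image in EG/\<Gamma> is parametrised by U \<times> V through coords, and \<psi>
  turns the \<Gamma>-action on the tube into left translation of \<Gamma> (triv).\<close>

definition "EU = {e \<in> topspace EG. orbit G aE e \<in> U}"
definition "fibre_coset y = inv (snd (\<phi>' y)) <# \<Gamma>"
definition "tube = {y \<in> EU. fibre_coset y \<in> V}"
definition "q\<Gamma> = orbit (subgrp G \<Gamma>) aE"
definition "coords0 y = (fst (\<phi>' y), fibre_coset y)"
definition "coords b = coords0 (SOME y. y \<in> tube \<and> q\<Gamma> y = b)"
definition "triv = (\<lambda>(b, \<gamma>). \<phi> (fst (coords b), inv (\<psi> (snd (coords b), \<gamma>))))"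
definition "triv_inv y = (q\<Gamma> y, snd (\<psi>' (inv (snd (\<phi>' y)))))"

lemma topspace_charts:
  "topspace (prod_topology (subtopology (orbit_space G EG aE) U) TG) = U \<times> carrier G"
  "topspace (subtopology EG EU) = EU"
  "topspace (prod_topology (subtopology (coset_space G TG \<Gamma>) V) (subtopology TG \<Gamma>)) = V \<times> \<Gamma>"
  "topspace (subtopology TG {g \<in> topspace TG. g <# \<Gamma> \<in> V}) = {g \<in> carrier G. g <# \<Gamma> \<in> V}"
  using openin_subset[OF U] openin_subset[OF V] \<Gamma>_subset E.topspace_group
  by (auto simp: topspace_prod_topology EU_def)

lemma \<phi>'_mem: assumes "y \<in> EU" shows "\<phi>' y \<in> U \<times> carrier G" "\<phi> (\<phi>' y) = y"
  using homeomorphic_maps_apply[OF \<phi>[folded EU_def, unfolded homeomorphic_maps_sym[of _ _ \<phi>]]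
      topspace_charts(2,1) assms] .

lemma \<phi>_mem: assumes "u \<in> U" "g \<in> carrier G" shows "\<phi> (u, g) \<in> EU" "\<phi>' (\<phi> (u, g)) = (u, g)"
  using homeomorphic_maps_apply[OF \<phi>[folded EU_def] topspace_charts(1,2)] assms by auto

lemma \<psi>'_mem:
  assumes "g \<in> carrier G" "g <# \<Gamma> \<in> V" shows "\<psi>' g \<in> V \<times> \<Gamma>" "\<psi> (\<psi>' g) = g"
  using homeomorphic_maps_apply[OF \<psi>[unfolded homeomorphic_maps_sym[of _ _ \<psi>]] topspace_charts(4,3)] assms
  by auto

lemma \<psi>_mem: assumes "v \<in> V" "\<gamma> \<in> \<Gamma>" shows "\<psi> (v, \<gamma>) \<in> carrier G" "\<psi>' (\<psi> (v, \<gamma>)) = (v, \<gamma>)"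
  using homeomorphic_maps_apply[OF \<psi> topspace_charts(3,4)] assms by auto

lemma EU_subset: "EU \<subseteq> topspace EG"
  unfolding EU_def by auto

lemma tube_subset: "tube \<subseteq> topspace EG"
  unfolding tube_def using EU_subset by auto

lemma EU_cases:
  assumes "y \<in> EU"
  obtains u g where "\<phi>' y = (u, g)" "u \<in> U" "g \<in> carrier G" "y = \<phi> (u, g)"
  using \<phi>'_mem[OF assms] by (metis mem_Sigma_iff surj_pair)

lemma tube_act:
  assumes y: "y \<in> tube" and \<delta>: "\<delta> \<in> \<Gamma>"
  shows "aE \<delta> y \<in> tube" "coords0 (aE \<delta> y) = coords0 y"
proof -
  obtain u g where ug: "\<phi>' y = (u, g)" "u \<in> U" "g \<in> carrier G" "y = \<phi> (u, g)"
    using y unfolding tube_def by (blast elim: EU_cases)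
  have \<delta>c: "\<delta> \<in> carrier G" using \<delta> \<Gamma>_subset by auto
  have "aE \<delta> y = \<phi> (u, \<delta> \<otimes> g)" using \<phi>_equivariant ug \<delta>c by simp
  then have \<delta>y: "aE \<delta> y \<in> EU" "\<phi>' (aE \<delta> y) = (u, \<delta> \<otimes> g)"
    using \<phi>_mem[of u "\<delta> \<otimes> g"] ug \<delta>c by auto
  have "inv (inv (\<delta> \<otimes> g)) \<otimes> inv g = \<delta>" using \<delta>c ug by (simp add: E.m_assoc)
  then have "inv (\<delta> \<otimes> g) <# \<Gamma> = inv g <# \<Gamma>"
    using E.l_coset_eq_iff[OF subgroup] \<delta> \<delta>c ug by simp
  then have "fibre_coset (aE \<delta> y) = fibre_coset y"
    unfolding fibre_coset_def using ug \<delta>y by simp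
  then show "aE \<delta> y \<in> tube" "coords0 (aE \<delta> y) = coords0 y"
    using y \<delta>y ug unfolding tube_def coords0_def by simp_all
qed

lemma same_orbit_in_tube:
  assumes "y' \<in> tube" "y \<in> topspace EG" "q\<Gamma> y = q\<Gamma> y'"
  obtains \<delta> where "\<delta> \<in> \<Gamma>" "y = aE \<delta> y'"
  using R.orbit_eq_iff[of y' y] assms tube_subset unfolding q\<Gamma>_def by auto

lemma tube_saturated:
  assumes y: "y \<in> topspace EG" and q: "q\<Gamma> y \<in> q\<Gamma> ` tube"
  shows "y \<in> tube"
proof -
  obtain y' where y': "y' \<in> tube" "q\<Gamma> y = q\<Gamma> y'" using q by auto
  then obtain \<delta> where "\<delta> \<in> \<Gamma>" "y = aE \<delta> y'" using y by (blast elim: same_orbit_in_tube)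
  then show ?thesis using tube_act(1) y' by simp
qed

lemma coords_q\<Gamma>: assumes y: "y \<in> tube" shows "coords (q\<Gamma> y) = coords0 y"
proof -
  define y' where "y' = (SOME y'. y' \<in> tube \<and> q\<Gamma> y' = q\<Gamma> y)"
  have "\<exists>y'. y' \<in> tube \<and> q\<Gamma> y' = q\<Gamma> y" using y by blast
  then have y': "y' \<in> tube" "q\<Gamma> y' = q\<Gamma> y" unfolding y'_def by (metis (mono_tags, lifting) someI_ex)+
  obtain \<delta> where "\<delta> \<in> \<Gamma>" "y = aE \<delta> y'"
    using same_orbit_in_tube[OF y'(1) _ y'(2)[symmetric]] y tube_subset by blast
  then show ?thesis unfolding coords_def y'_def[symmetric] using tube_act(2) y' by simp
qed

lemma continuous_map_\<phi>':
  "continuous_map (subtopology EG EU) (prod_topology (subtopology (orbit_space G EG aE) U) TG) \<phi>'"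
  using \<phi> unfolding homeomorphic_maps_def EU_def by blast

lemma continuous_map_coset:
  "continuous_map TG (coset_space G TG \<Gamma>) (\<lambda>g. g <# \<Gamma>)"
  unfolding coset_space_def by (rule continuous_map_quotient_topology)

lemma continuous_map_fibre_coset:
  "continuous_map (subtopology EG EU) (coset_space G TG \<Gamma>) fibre_coset"
  unfolding fibre_coset_def
  by (rule continuous_map_compose'[OF E.continuous_map_inv_of continuous_map_coset])
    (rule continuous_map_snd_of'[OF continuous_map_\<phi>'])

lemma openin_tube: "openin EG tube"
proof -
  have "openin EG EU"
    unfolding EU_def using openin_continuous_map_preimage[OF E.continuous_map_orbit U] .
  moreover have "openin (subtopology EG EU) tube"
    using openin_continuous_map_preimage[OF continuous_map_fibre_coset V]
    unfolding tube_def topspace_charts .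
  ultimately show ?thesis using openin_open_subtopology by blast
qed

lemma triv_props:
  assumes b: "b \<in> q\<Gamma> ` tube" and \<gamma>: "\<gamma> \<in> \<Gamma>"
  shows "triv (b, \<gamma>) \<in> tube" "q\<Gamma> (triv (b, \<gamma>)) = b" "triv_inv (triv (b, \<gamma>)) = (b, \<gamma>)"
    "\<And>h. h \<in> \<Gamma> \<Longrightarrow> triv (b, h \<otimes> \<gamma>) = aE h (triv (b, \<gamma>))"
proof -
  obtain y where y: "y \<in> tube" "b = q\<Gamma> y" using b by auto
  obtain u g where ug: "\<phi>' y = (u, g)" "u \<in> U" "g \<in> carrier G" "y = \<phi> (u, g)"
    using y unfolding tube_def by (blast elim: EU_cases)
  define v where "v = inv g <# \<Gamma>"
  have v: "v \<in> V" using y ug unfolding tube_def fibre_coset_def v_def by simp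
  have coords: "coords b = (u, v)"
    using coords_q\<Gamma>[OF y(1)] y ug unfolding coords0_def fibre_coset_def v_def by simp
  define w where "w = \<psi> (v, \<gamma>)"
  have w: "w \<in> carrier G" "w <# \<Gamma> = v" "\<psi>' w = (v, \<gamma>)"
    using \<psi>_mem[OF v \<gamma>] \<psi>_coset[OF v \<gamma>] unfolding w_def by auto
  have triv_b: "triv (b, \<gamma>) = \<phi> (u, inv w)" by (simp add: triv_def coords w_def)
  define \<delta> where "\<delta> = inv w \<otimes> inv g"
  have \<delta>: "\<delta> \<in> \<Gamma>"
    using E.l_coset_eq_iff[OF subgroup w(1), of "inv g"] w(2) ug unfolding v_def \<delta>_def by simp
  have "inv w = \<delta> \<otimes> g" unfolding \<delta>_def using w ug by (simp add: E.m_assoc)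
  then have triv_act: "triv (b, \<gamma>) = aE \<delta> y"
    unfolding triv_b ug(4) using \<phi>_equivariant \<delta> \<Gamma>_subset ug by auto
  show "triv (b, \<gamma>) \<in> tube" unfolding triv_act using tube_act(1)[OF y(1) \<delta>] .
  show q: "q\<Gamma> (triv (b, \<gamma>)) = b"
    using R.orbit_act[of \<delta> y] \<delta> y tube_subset unfolding triv_act q\<Gamma>_def by auto
  have "\<phi>' (triv (b, \<gamma>)) = (u, inv w)" unfolding triv_b using \<phi>_mem(2) ug w by simp
  then show "triv_inv (triv (b, \<gamma>)) = (b, \<gamma>)" unfolding triv_inv_def using q w by simp
  fix h assume h: "h \<in> \<Gamma>"
  then have hc: "h \<in> carrier G" using \<Gamma>_subset by auto
  have "triv (b, h \<otimes> \<gamma>) = \<phi> (u, inv (w \<otimes> inv h))"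
    using \<psi>_equivariant[OF v \<gamma> h] by (simp add: triv_def coords w_def)
  also have "inv (w \<otimes> inv h) = h \<otimes> inv w" using w hc by (simp add: E.inv_mult_group)
  finally show "triv (b, h \<otimes> \<gamma>) = aE h (triv (b, \<gamma>))"
    unfolding triv_b using \<phi>_equivariant ug w hc by simp
qed

lemma triv_triv_inv: assumes y: "y \<in> tube" shows "triv (triv_inv y) = y"
proof -
  obtain u g where ug: "\<phi>' y = (u, g)" "u \<in> U" "g \<in> carrier G" "y = \<phi> (u, g)"
    using y unfolding tube_def by (blast elim: EU_cases)
  have cy: "fibre_coset y = inv g <# \<Gamma>" unfolding fibre_coset_def ug(1) by simp
  then have "\<psi>' (inv g) \<in> V \<times> \<Gamma>" "\<psi> (\<psi>' (inv g)) = inv g"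
    using \<psi>'_mem[of "inv g"] y ug unfolding tube_def by auto
  moreover obtain v \<gamma> where v\<gamma>: "\<psi>' (inv g) = (v, \<gamma>)" by fastforce
  ultimately have v\<gamma>': "v \<in> V" "\<gamma> \<in> \<Gamma>" "\<psi> (v, \<gamma>) = inv g" by auto
  then have "v = fibre_coset y" using \<psi>_coset[of v \<gamma>] cy by simp
  then have "triv (triv_inv y) = \<phi> (u, inv (\<psi> (v, \<gamma>)))"
    using coords_q\<Gamma>[OF y] ug v\<gamma> by (simp add: triv_def triv_inv_def coords0_def)
  then show ?thesis using v\<gamma>' ug by simp
qed

lemma continuous_map_q\<Gamma>:
  "continuous_map (subtopology EG tube) (subtopology (orbit_space (subgrp G \<Gamma>) EG aE) (q\<Gamma> ` tube)) q\<Gamma>"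
  unfolding continuous_map_in_subtopology q\<Gamma>_def
  using continuous_map_from_subtopology[OF R.continuous_map_orbit] tube_subset by auto

lemma continuous_map_\<phi>'_tube:
  "continuous_map (subtopology EG tube) (prod_topology (subtopology (orbit_space G EG aE) U) TG) \<phi>'"
  using continuous_map_from_subtopology[OF continuous_map_\<phi>', of tube]
  by (simp add: subtopology_subtopology Int_absorb1 tube_def)

lemma continuous_map_triv_inv:
  "continuous_map (subtopology EG tube)
     (prod_topology (subtopology (orbit_space (subgrp G \<Gamma>) EG aE) (q\<Gamma> ` tube)) (subtopology TG \<Gamma>)) triv_inv"
proof -
  have "continuous_map (subtopology EG tube) (subtopology TG {g \<in> topspace TG. g <# \<Gamma> \<in> V})
          (\<lambda>y. inv (snd (\<phi>' y)))"
    unfolding continuous_map_in_subtopology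
    using E.continuous_map_inv_of[OF continuous_map_snd_of'[OF continuous_map_\<phi>'_tube]]
      \<phi>'_mem(1) E.topspace_group
    by (auto simp: tube_def fibre_coset_def mem_Times_iff)
  moreover have "continuous_map (subtopology TG {g \<in> topspace TG. g <# \<Gamma> \<in> V})
          (prod_topology (subtopology (coset_space G TG \<Gamma>) V) (subtopology TG \<Gamma>)) \<psi>'"
    using \<psi> unfolding homeomorphic_maps_def by blast
  ultimately show ?thesis
    unfolding triv_inv_def[abs_def]
    by (intro continuous_map_pairedI continuous_map_q\<Gamma> continuous_map_snd_of')
      (rule continuous_map_compose')
qed

lemma continuous_map_coords:
  "continuous_map (subtopology (orbit_space (subgrp G \<Gamma>) EG aE) (q\<Gamma> ` tube))
     (prod_topology (subtopology (orbit_space G EG aE) U) (subtopology (coset_space G TG \<Gamma>) V)) coords"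
  unfolding orbit_space_def[of "subgrp G \<Gamma>"] q\<Gamma>_def[symmetric]
proof (rule continuous_map_from_quotient_topology_on_saturated[OF openin_tube tube_saturated])
  have "continuous_map (subtopology EG tube) (subtopology (coset_space G TG \<Gamma>) V) fibre_coset"
    unfolding continuous_map_in_subtopology
    using continuous_map_from_subtopology[OF continuous_map_fibre_coset, of tube]
    by (auto simp: subtopology_subtopology Int_absorb1 tube_def)
  then have "continuous_map (subtopology EG tube)
     (prod_topology (subtopology (orbit_space G EG aE) U) (subtopology (coset_space G TG \<Gamma>) V)) coords0"
    unfolding coords0_def[abs_def]
    by (intro continuous_map_pairedI continuous_map_fst_of'[OF continuous_map_\<phi>'_tube])
  then show "continuous_map (subtopology EG tube)
     (prod_topology (subtopology (orbit_space G EG aE) U) (subtopology (coset_space G TG \<Gamma>) V)) (coords \<circ> q\<Gamma>)"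
    by (rule continuous_map_eq) (simp add: coords_q\<Gamma>)
qed

lemma continuous_map_triv:
  "continuous_map
     (prod_topology (subtopology (orbit_space (subgrp G \<Gamma>) EG aE) (q\<Gamma> ` tube)) (subtopology TG \<Gamma>))
     (subtopology EG tube) triv"
proof -
  let ?Z = "prod_topology (subtopology (orbit_space (subgrp G \<Gamma>) EG aE) (q\<Gamma> ` tube)) (subtopology TG \<Gamma>)"
  have c: "continuous_map ?Z (prod_topology (subtopology (orbit_space G EG aE) U) (subtopology (coset_space G TG \<Gamma>) V))
            (\<lambda>p. coords (fst p))"
    by (rule continuous_map_compose'[OF continuous_map_fst continuous_map_coords])
  have "continuous_map (prod_topology (subtopology (coset_space G TG \<Gamma>) V) (subtopology TG \<Gamma>)) TG \<psi>"
    using \<psi> unfolding homeomorphic_maps_def by (blast intro: continuous_map_into_fulltopology)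
  from continuous_map_compose'[OF continuous_map_pairedI[OF continuous_map_snd_of'[OF c] continuous_map_snd] this]
  have c\<psi>: "continuous_map ?Z TG (\<lambda>p. inv (\<psi> (snd (coords (fst p)), snd p)))"
    by (rule E.continuous_map_inv_of)
  have "continuous_map (prod_topology (subtopology (orbit_space G EG aE) U) TG) (subtopology EG EU) \<phi>"
    using \<phi> unfolding homeomorphic_maps_def EU_def by blast
  from continuous_map_compose'[OF continuous_map_pairedI[OF continuous_map_fst_of'[OF c] c\<psi>] this]
  have "continuous_map ?Z (subtopology EG EU) triv"
    unfolding triv_def case_prod_unfold .
  moreover have "triv ` topspace ?Z \<subseteq> tube"
    using triv_props(1) openin_subset[OF R.openin_orbit_image[OF openin_tube]] \<Gamma>_subset E.topspace_group
    by (auto simp: topspace_prod_topology q\<Gamma>_def)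
  ultimately show ?thesis
    by (simp add: continuous_map_in_subtopology image_subset_iff Pi_iff)
qed

lemma local_trivialisation:
  "openin (orbit_space (subgrp G \<Gamma>) EG aE) (q\<Gamma> ` tube) \<and>
   homeomorphic_map (prod_topology (subtopology (orbit_space (subgrp G \<Gamma>) EG aE) (q\<Gamma> ` tube)) (subtopology TG \<Gamma>))
      (subtopology EG {e \<in> topspace EG. q\<Gamma> e \<in> q\<Gamma> ` tube}) triv \<and>
   (\<forall>u\<in>q\<Gamma> ` tube. \<forall>g\<in>\<Gamma>. q\<Gamma> (triv (u, g)) = u \<and> (\<forall>h\<in>\<Gamma>. triv (u, h \<otimes> g) = aE h (triv (u, g))))"
proof (intro conjI)
  show "openin (orbit_space (subgrp G \<Gamma>) EG aE) (q\<Gamma> ` tube)"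
    unfolding q\<Gamma>_def using R.openin_orbit_image[OF openin_tube] .
  have "{e \<in> topspace EG. q\<Gamma> e \<in> q\<Gamma> ` tube} = tube"
    using tube_saturated tube_subset by auto
  moreover have "topspace (prod_topology (subtopology (orbit_space (subgrp G \<Gamma>) EG aE) (q\<Gamma> ` tube))
                   (subtopology TG \<Gamma>)) = q\<Gamma> ` tube \<times> \<Gamma>"
    using openin_subset[OF R.openin_orbit_image[OF openin_tube]] \<Gamma>_subset E.topspace_group
    by (auto simp: topspace_prod_topology q\<Gamma>_def)
  ultimately show "homeomorphic_map
     (prod_topology (subtopology (orbit_space (subgrp G \<Gamma>) EG aE) (q\<Gamma> ` tube)) (subtopology TG \<Gamma>))
     (subtopology EG {e \<in> topspace EG. q\<Gamma> e \<in> q\<Gamma> ` tube}) triv"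
    using continuous_map_triv continuous_map_triv_inv triv_props(3) triv_triv_inv tube_subset
    by (auto simp: homeomorphic_maps_def intro!: homeomorphic_maps_imp_map[where g=triv_inv])
  show "\<forall>u\<in>q\<Gamma> ` tube. \<forall>g\<in>\<Gamma>. q\<Gamma> (triv (u, g)) = u \<and> (\<forall>h\<in>\<Gamma>. triv (u, h \<otimes> g) = aE h (triv (u, g)))"
    using triv_props(2,4) by blast
qed

end

lemma principal_bundle_chart:
  assumes "principal_bundle G TG E a B p" and "b \<in> topspace B"
  obtains U \<phi> \<phi>' where "openin B U" "b \<in> U"
    "homeomorphic_maps (prod_topology (subtopology B U) TG) (subtopology E {e \<in> topspace E. p e \<in> U}) \<phi> \<phi>'"
    "\<And>u g. u \<in> U \<Longrightarrow> g \<in> carrier G \<Longrightarrow> p (\<phi> (u, g)) = u"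
    "\<And>u g h. u \<in> U \<Longrightarrow> g \<in> carrier G \<Longrightarrow> h \<in> carrier G \<Longrightarrow> \<phi> (u, h \<otimes>\<^bsub>G\<^esub> g) = a h (\<phi> (u, g))"
proof -
  obtain U \<phi> where "openin B U" "b \<in> U"
    and \<phi>: "homeomorphic_map (prod_topology (subtopology B U) TG) (subtopology E {e \<in> topspace E. p e \<in> U}) \<phi>"
    and "\<forall>u\<in>U. \<forall>g\<in>carrier G. p (\<phi> (u, g)) = u \<and> (\<forall>h\<in>carrier G. \<phi> (u, h \<otimes>\<^bsub>G\<^esub> g) = a h (\<phi> (u, g)))"
    using assms unfolding principal_bundle_def by meson
  moreover obtain \<phi>' where
    "homeomorphic_maps (prod_topology (subtopology B U) TG) (subtopology E {e \<in> topspace E. p e \<in> U}) \<phi> \<phi>'"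
    using \<phi> homeomorphic_map_maps by blast
  ultimately show thesis using that by blast
qed

lemma principal_bundle_subgroup_chart:
  assumes pb: "principal_bundle G TG EG aE (orbit_space G EG aE) (orbit G aE)"
    and sub: "subgroup \<Gamma> G"
    and pb\<Gamma>: "principal_bundle (subgrp G \<Gamma>) (subtopology TG \<Gamma>) TG (\<lambda>h g. g \<otimes>\<^bsub>G\<^esub> inv\<^bsub>G\<^esub> h)
        (coset_space G TG \<Gamma>) (\<lambda>g. g <#\<^bsub>G\<^esub> \<Gamma>)"
    and b: "b \<in> topspace (orbit_space (subgrp G \<Gamma>) EG aE)"
  shows "\<exists>W \<Phi>. openin (orbit_space (subgrp G \<Gamma>) EG aE) W \<and> b \<in> W \<and>
        homeomorphic_map (prod_topology (subtopology (orbit_space (subgrp G \<Gamma>) EG aE) W) (subtopology TG \<Gamma>))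
                         (subtopology EG {e \<in> topspace EG. orbit (subgrp G \<Gamma>) aE e \<in> W}) \<Phi> \<and>
        (\<forall>u\<in>W. \<forall>g\<in>\<Gamma>. orbit (subgrp G \<Gamma>) aE (\<Phi> (u, g)) = u \<and>
            (\<forall>h\<in>\<Gamma>. \<Phi> (u, h \<otimes>\<^bsub>G\<^esub> g) = aE h (\<Phi> (u, g))))"
proof -
  interpret E: top_action G TG EG aE
    using pb unfolding principal_bundle_def top_action_def by blast
  interpret R: top_action "subgrp G \<Gamma>" "subtopology TG \<Gamma>" EG aE
    by (rule E.top_action_subgroup[OF sub])
  obtain e where e: "e \<in> topspace EG" "b = orbit (subgrp G \<Gamma>) aE e"
    using b unfolding R.topspace_orbit_space by blast
  have "orbit G aE e \<in> topspace (orbit_space G EG aE)"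
    using e unfolding E.topspace_orbit_space by auto
  with pb obtain U \<phi> \<phi>' where U: "openin (orbit_space G EG aE) U" "orbit G aE e \<in> U"
    and \<phi>': "homeomorphic_maps (prod_topology (subtopology (orbit_space G EG aE) U) TG)
                       (subtopology EG {e \<in> topspace EG. orbit G aE e \<in> U}) \<phi> \<phi>'"
    and \<phi>_eq: "\<And>u g h. u \<in> U \<Longrightarrow> g \<in> carrier G \<Longrightarrow> h \<in> carrier G \<Longrightarrow> \<phi> (u, h \<otimes>\<^bsub>G\<^esub> g) = aE h (\<phi> (u, g))"
    by (rule principal_bundle_chart) blast
  have "e \<in> topspace (subtopology EG {e \<in> topspace EG. orbit G aE e \<in> U})" using e U by auto
  from homeomorphic_maps_apply[OF \<phi>'[unfolded homeomorphic_maps_sym[of _ _ \<phi>]] refl refl this]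
  obtain u g where ug: "\<phi>' e = (u, g)" "g \<in> carrier G"
    using openin_subset[OF U(1)] E.topspace_group by (auto simp: topspace_prod_topology)
  have "inv\<^bsub>G\<^esub> g <#\<^bsub>G\<^esub> \<Gamma> \<in> topspace (coset_space G TG \<Gamma>)"
    unfolding coset_space_def topspace_quotient_topology using ug E.topspace_group by auto
  with pb\<Gamma> obtain V \<psi> \<psi>' where V: "openin (coset_space G TG \<Gamma>) V" "inv\<^bsub>G\<^esub> g <#\<^bsub>G\<^esub> \<Gamma> \<in> V"
    and \<psi>': "homeomorphic_maps (prod_topology (subtopology (coset_space G TG \<Gamma>) V) (subtopology TG \<Gamma>))
                       (subtopology TG {g \<in> topspace TG. g <#\<^bsub>G\<^esub> \<Gamma> \<in> V}) \<psi> \<psi>'"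
    and \<psi>_coset: "\<And>v \<gamma>. v \<in> V \<Longrightarrow> \<gamma> \<in> carrier (subgrp G \<Gamma>) \<Longrightarrow> \<psi> (v, \<gamma>) <#\<^bsub>G\<^esub> \<Gamma> = v"
    and \<psi>_eq: "\<And>v \<gamma> h. v \<in> V \<Longrightarrow> \<gamma> \<in> carrier (subgrp G \<Gamma>) \<Longrightarrow> h \<in> carrier (subgrp G \<Gamma>) \<Longrightarrow>
          \<psi> (v, h \<otimes>\<^bsub>subgrp G \<Gamma>\<^esub> \<gamma>) = \<psi> (v, \<gamma>) \<otimes>\<^bsub>G\<^esub> inv\<^bsub>G\<^esub> h"
    by (rule principal_bundle_chart) blast
  interpret C: restricted_chart G TG EG aE \<Gamma> U \<phi> \<phi>' V \<psi> \<psi>'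
    unfolding restricted_chart_def restricted_chart_axioms_def top_action_def
    using E.continuous_action sub U(1) \<phi>' \<phi>_eq V(1) \<psi>' \<psi>_coset \<psi>_eq by simp
  have "b \<in> C.q\<Gamma> ` C.tube"
    using e U ug V(2) unfolding C.q\<Gamma>_def C.tube_def C.EU_def C.fibre_coset_def by auto
  with C.local_trivialisation show ?thesis
    unfolding C.q\<Gamma>_def by blast
qed

lemma principal_bundle_subgroup:
  assumes pb: "principal_bundle G TG EG aE (orbit_space G EG aE) (orbit G aE)"
    and sub: "subgroup \<Gamma> G"
    and pb\<Gamma>: "principal_bundle (subgrp G \<Gamma>) (subtopology TG \<Gamma>) TG (\<lambda>h g. g \<otimes>\<^bsub>G\<^esub> inv\<^bsub>G\<^esub> h)
        (coset_space G TG \<Gamma>) (\<lambda>g. g <#\<^bsub>G\<^esub> \<Gamma>)"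
  shows "principal_bundle (subgrp G \<Gamma>) (subtopology TG \<Gamma>) EG aE
           (orbit_space (subgrp G \<Gamma>) EG aE) (orbit (subgrp G \<Gamma>) aE)"
proof -
  interpret E: top_action G TG EG aE
    using pb unfolding principal_bundle_def top_action_def by blast
  interpret R: top_action "subgrp G \<Gamma>" "subtopology TG \<Gamma>" EG aE
    by (rule E.top_action_subgroup[OF sub])
  show ?thesis
    unfolding principal_bundle_def
    using R.continuous_action R.continuous_map_orbit R.topspace_orbit_space R.orbit_act
      principal_bundle_subgroup_chart[OF pb sub pb\<Gamma>] by auto
qed

lemma universal_bundle_subgroup:
  assumes "universal_bundle G TG EG aE" and "subgroup \<Gamma> G"
    and "principal_bundle (subgrp G \<Gamma>) (subtopology TG \<Gamma>) TG (\<lambda>h g. g \<otimes>\<^bsub>G\<^esub> inv\<^bsub>G\<^esub> h)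
        (coset_space G TG \<Gamma>) (\<lambda>g. g <#\<^bsub>G\<^esub> \<Gamma>)"
  shows "universal_bundle (subgrp G \<Gamma>) (subtopology TG \<Gamma>) EG aE"
  using assms principal_bundle_subgroup unfolding universal_bundle_def by blast

lemma classifying_space_model_of_slice:
  assumes "universal_bundle G TG EG aE" and "slice G TG X act S \<Gamma>"
  shows "classifying_space_model G TG \<Gamma> (orbit_space (subgrp G \<Gamma>) EG aE)"
proof -
  have "subgroup \<Gamma> G" using assms(2) unfolding slice_def by (elim conjE)
  moreover have "principal_bundle (subgrp G \<Gamma>) (subtopology TG \<Gamma>) TG (\<lambda>h g. g \<otimes>\<^bsub>G\<^esub> inv\<^bsub>G\<^esub> h)
      (coset_space G TG \<Gamma>) (\<lambda>g. g <#\<^bsub>G\<^esub> \<Gamma>)"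
    using assms(2) unfolding slice_def by (elim conjE) assumption
  ultimately show ?thesis
    unfolding classifying_space_model_def using universal_bundle_subgroup[OF assms(1)] by blast
qed

section \<open>Slices and conjugacy of stabilisers\<close>

locale slice_chart = top_action G TG X act
  for G (structure) and TG :: "'g topology" and X :: "'x topology" and act +
  fixes S :: "'x set" and \<Gamma> :: "'g set" and U :: "'g set set" and sec :: "'g set \<Rightarrow> 'g"
  assumes S_subset: "S \<subseteq> topspace X"
    and subgroup: "subgroup \<Gamma> G"
    and slice_disjoint: "\<And>g. g \<in> carrier G \<Longrightarrow> act g ` S \<inter> S \<noteq> {} \<Longrightarrow> g \<in> \<Gamma>"
    and slice_fixed: "\<And>g s. g \<in> \<Gamma> \<Longrightarrow> s \<in> S \<Longrightarrow> act g s = s"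
    and U: "openin (coset_space G TG \<Gamma>) U" and \<Gamma>_in_U: "\<Gamma> \<in> U"
    and continuous_map_sec: "continuous_map (subtopology (coset_space G TG \<Gamma>) U) TG sec"
    and sec_coset: "\<And>c. c \<in> U \<Longrightarrow> sec c <# \<Gamma> = c"
    and embedding: "embedding_map (prod_topology (subtopology (coset_space G TG \<Gamma>) U) (subtopology X S)) X
                      (\<lambda>(c, s). act (sec c) s)"
    and open_map: "open_map (prod_topology (subtopology (coset_space G TG \<Gamma>) U) (subtopology X S)) X
                      (\<lambda>(c, s). act (sec c) s)"
begin

lemma \<Gamma>_subset: "\<Gamma> \<subseteq> carrier G"
  using subgroup by (rule subgroup.subset)

lemma topspace_chart_domain:
  "topspace (prod_topology (subtopology (coset_space G TG \<Gamma>) U) (subtopology X S)) = U \<times> S"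
  using openin_subset[OF U] S_subset by (auto simp: topspace_prod_topology)

lemma sec_closed: "c \<in> U \<Longrightarrow> sec c \<in> carrier G"
  using continuous_map_image_subset_topspace[OF continuous_map_sec] openin_subset[OF U] topspace_group
  by auto

lemma sec_identity_coset: "sec \<Gamma> \<in> \<Gamma>"
proof -
  have sc: "sec \<Gamma> \<in> carrier G" using sec_closed \<Gamma>_in_U by blast
  have "sec \<Gamma> <# \<Gamma> = \<one> <# \<Gamma>" using sec_coset[OF \<Gamma>_in_U] \<Gamma>_subset by (simp add: lcos_mult_one)
  then have "inv (sec \<Gamma>) \<in> \<Gamma>" using l_coset_eq_iff[OF subgroup sc] sc by simp
  then have "inv (inv (sec \<Gamma>)) \<in> \<Gamma>" by (rule subgroup.m_inv_closed[OF subgroup])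
  then show ?thesis using sc by simp
qed

lemma Stab_slice: assumes s: "s \<in> S" shows "Stab G act s = \<Gamma>"
proof
  show "Stab G act s \<subseteq> \<Gamma>"
  proof
    fix g assume "g \<in> Stab G act s"
    then have "g \<in> carrier G" "s \<in> act g ` S \<inter> S" using s unfolding Stab_def by (auto intro: rev_image_eqI)
    then show "g \<in> \<Gamma>" using slice_disjoint by blast
  qed
  show "\<Gamma> \<subseteq> Stab G act s" unfolding Stab_def using slice_fixed s \<Gamma>_subset by auto
qed

lemma act_slice_eq:
  assumes g: "g \<in> carrier G" "g' \<in> carrier G" and s: "s \<in> S" "s' \<in> S" and eq: "act g s = act g' s'"
  shows "s = s'" "inv g' \<otimes> g \<in> \<Gamma>"
proof -
  have sX: "s \<in> topspace X" "s' \<in> topspace X" using s S_subset by auto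
  have "act (inv g' \<otimes> g) s = act (inv g') (act g' s')" using g sX eq by (simp add: act_mult)
  also have "\<dots> = s'" using act_inv_act g sX by simp
  finally have e: "act (inv g' \<otimes> g) s = s'" .
  then have "s' \<in> act (inv g' \<otimes> g) ` S \<inter> S" using s by (auto intro: rev_image_eqI)
  then show \<gamma>: "inv g' \<otimes> g \<in> \<Gamma>" using slice_disjoint g by blast
  show "s = s'" using slice_fixed[OF \<gamma> s(1)] e by simp
qed

definition "chart_image = (\<lambda>(c, s). act (sec c) s) ` (U \<times> S)"
definition "GS = (\<lambda>(g, s). act g s) ` (carrier G \<times> S)"

lemma mem_GS: "x \<in> GS \<longleftrightarrow> (\<exists>g\<in>carrier G. \<exists>s\<in>S. x = act g s)"
  unfolding GS_def by auto

lemma openin_chart_image: "openin X chart_image"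
  using open_map openin_topspace[of "prod_topology (subtopology (coset_space G TG \<Gamma>) U) (subtopology X S)"]
  unfolding open_map_def topspace_chart_domain chart_image_def by blast

lemma slice_subset_chart_image: "S \<subseteq> chart_image"
proof
  fix s assume "s \<in> S"
  then have "s = (\<lambda>(c, s). act (sec c) s) (\<Gamma>, s)" using slice_fixed[OF sec_identity_coset] by simp
  then show "s \<in> chart_image" unfolding chart_image_def using \<open>s \<in> S\<close> \<Gamma>_in_U by blast
qed

lemma GS_subset: "GS \<subseteq> topspace X"
  unfolding GS_def using act_closed S_subset by auto

lemma slice_subset_GS: "S \<subseteq> GS"
proof
  fix s assume "s \<in> S"
  then have "s = act \<one> s" using act_one S_subset by auto
  then show "s \<in> GS" unfolding mem_GS using \<open>s \<in> S\<close> by blast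
qed

lemma act_GS:
  assumes x: "x \<in> GS" and h: "h \<in> carrier G"
  shows "act h x \<in> GS"
proof -
  obtain g s where gs: "g \<in> carrier G" "s \<in> S" "x = act g s" using x unfolding mem_GS by blast
  then have "act h x = act (h \<otimes> g) s" using h S_subset act_mult by auto
  then show ?thesis unfolding mem_GS using gs h by blast
qed

lemma GS_eq_Union: "GS = (\<Union>g\<in>carrier G. act g ` chart_image)"
proof (intro equalityI subsetI)
  fix x assume "x \<in> GS"
  then show "x \<in> (\<Union>g\<in>carrier G. act g ` chart_image)"
    unfolding mem_GS using slice_subset_chart_image by blast
next
  fix x assume "x \<in> (\<Union>g\<in>carrier G. act g ` chart_image)"
  then obtain g c s where gcs: "g \<in> carrier G" "c \<in> U" "s \<in> S" "x = act g (act (sec c) s)"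
    unfolding chart_image_def by auto
  then have "act (sec c) s \<in> GS" using act_GS slice_subset_GS sec_closed by blast
  then show "x \<in> GS" using act_GS gcs by simp
qed

lemma openin_GS: "openin X GS"
  unfolding GS_eq_Union using openin_act_image openin_chart_image by auto

lemma GS_saturated:
  assumes y: "y \<in> topspace X" and "orbit G act y \<in> orbit G act ` GS"
  shows "y \<in> GS"
proof -
  obtain x where x: "x \<in> GS" "orbit G act y = orbit G act x" using assms by auto
  then obtain g where "g \<in> carrier G" "y = act g x" using orbit_eq_iff[of x y] y GS_subset by auto
  then show ?thesis using act_GS x by simp
qed

lemma Stab_GS: assumes "x \<in> GS" shows "\<exists>g\<in>carrier G. Stab G act x = (\<lambda>h. g \<otimes> h \<otimes> inv g) ` \<Gamma>"
proof -
  obtain g s where "g \<in> carrier G" "s \<in> S" "x = act g s" using assms unfolding mem_GS by blast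
  then show ?thesis using Stab_act[of g s] Stab_slice[of s] S_subset by auto
qed

text \<open>Near x1 = g1 s1, translate by g1\<inverse> into the chart image and invert the slice embedding.\<close>

lemma local_slice_coordinates:
  assumes x1: "x1 \<in> GS"
  obtains N cN sN g1 where "openin X N" "x1 \<in> N" "N \<subseteq> GS" "g1 \<in> carrier G"
    "continuous_map (subtopology X N) (subtopology (coset_space G TG \<Gamma>) U) cN"
    "continuous_map (subtopology X N) (subtopology X S) sN"
    "\<And>x. x \<in> N \<Longrightarrow> cN x \<in> U \<and> sN x \<in> S \<and> x = act (g1 \<otimes> sec (cN x)) (sN x)"
proof -
  obtain g1 s1 where gs: "g1 \<in> carrier G" "s1 \<in> S" "x1 = act g1 s1" using x1 unfolding mem_GS by blast
  define N where "N = act g1 ` chart_image"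
  let ?P = "prod_topology (subtopology (coset_space G TG \<Gamma>) U) (subtopology X S)"
  obtain e' where e': "homeomorphic_maps ?P (subtopology X chart_image) (\<lambda>(c, s). act (sec c) s) e'"
    using embedding homeomorphic_map_maps
    unfolding embedding_map_def topspace_chart_domain chart_image_def by metis
  have chart_image_sub: "chart_image \<subseteq> topspace X" using openin_subset[OF openin_chart_image] .
  have pulled_back: "act (inv g1) x \<in> chart_image" "act g1 (act (inv g1) x) = x" if "x \<in> N" for x
    using that gs(1) chart_image_sub act_inv_act unfolding N_def by auto
  have "continuous_map (subtopology X N) (subtopology X chart_image) (act (inv g1))"
    unfolding continuous_map_in_subtopology
    using continuous_map_from_subtopology[OF continuous_map_act] gs(1) pulled_back by auto
  moreover have "continuous_map (subtopology X chart_image) ?P e'"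
    using e' unfolding homeomorphic_maps_def by blast
  ultimately have c: "continuous_map (subtopology X N) ?P (\<lambda>x. e' (act (inv g1) x))"
    by (rule continuous_map_compose')
  show ?thesis
  proof (rule that[OF _ _ _ gs(1) continuous_map_fst_of'[OF c] continuous_map_snd_of'[OF c]])
    show "openin X N" unfolding N_def using openin_act_image[OF gs(1) openin_chart_image] .
    show "x1 \<in> N" unfolding N_def using gs slice_subset_chart_image by auto
    show "N \<subseteq> GS" unfolding N_def GS_eq_Union using gs(1) by blast
    fix x assume x: "x \<in> N"
    let ?t = "act (inv g1) x"
    have "e' ?t \<in> U \<times> S" "(\<lambda>(c, s). act (sec c) s) (e' ?t) = ?t"
      using homeomorphic_maps_apply[OF e'[unfolded homeomorphic_maps_sym[of _ _ "\<lambda>(c, s). act (sec c) s"]]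
          topspace_subtopology_subset[OF chart_image_sub] topspace_chart_domain pulled_back(1)[OF x]] .
    then show "fst (e' ?t) \<in> U \<and> snd (e' ?t) \<in> S \<and> x = act (g1 \<otimes> sec (fst (e' ?t))) (snd (e' ?t))"
      using pulled_back(2)[OF x] gs(1) sec_closed S_subset by (auto simp: act_mult case_prod_unfold)
  qed
qed

end

context top_action
begin

lemma slice_chart_of_constant_slice:
  assumes "constant_slice G TG X act S \<Gamma>"
  obtains U sec where "slice_chart G TG X act S \<Gamma> U sec"
proof -
  have sl: "slice G TG X act S \<Gamma>" and fixed: "\<forall>g\<in>\<Gamma>. \<forall>s\<in>S. act g s = s"
    using assms unfolding constant_slice_def by auto
  obtain U sec where A: "S \<subseteq> topspace X" "subgroup \<Gamma> G"
      "\<forall>g\<in>carrier G. act g ` S \<inter> S \<noteq> {} \<longrightarrow> g \<in> \<Gamma>"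
      "openin (coset_space G TG \<Gamma>) U" "\<Gamma> \<in> U"
      "continuous_map (subtopology (coset_space G TG \<Gamma>) U) TG sec"
      "\<forall>c\<in>U. sec c <# \<Gamma> = c"
      "embedding_map (prod_topology (subtopology (coset_space G TG \<Gamma>) U) (subtopology X S)) X
         (\<lambda>(c, s). act (sec c) s)"
      "open_map (prod_topology (subtopology (coset_space G TG \<Gamma>) U) (subtopology X S)) X
         (\<lambda>(c, s). act (sec c) s)"
    using sl unfolding slice_def by (elim conjE exE) (rule that, assumption+)
  have "slice_chart G TG X act S \<Gamma> U sec"
    by (intro slice_chart.intro[OF top_action_axioms] slice_chart_axioms.intro)
      (use A fixed in blast)+
  then show ?thesis by (rule that)
qed

definition "stab_conj x y \<longleftrightarrow> (\<exists>g\<in>carrier G. Stab G act y = (\<lambda>h. g \<otimes> h \<otimes> inv g) ` Stab G act x)"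

lemma stab_conj_refl: "stab_conj x x"
  unfolding stab_conj_def using conj_image_one[OF Stab_subset] by (intro bexI[of _ \<one>]) auto

lemma stab_conj_sym: assumes "stab_conj x y" shows "stab_conj y x"
proof -
  obtain g where g: "g \<in> carrier G" "Stab G act y = (\<lambda>h. g \<otimes> h \<otimes> inv g) ` Stab G act x"
    using assms unfolding stab_conj_def by blast
  then have "Stab G act x = (\<lambda>h. inv g \<otimes> h \<otimes> inv (inv g)) ` Stab G act y"
    using conj_image_inv[OF g(1) Stab_subset] by simp
  then show ?thesis unfolding stab_conj_def using g(1) by (intro bexI[of _ "inv g"]) auto
qed

lemma stab_conj_trans: assumes "stab_conj x y" "stab_conj y z" shows "stab_conj x z"
proof -
  obtain g k where g: "g \<in> carrier G" "Stab G act y = (\<lambda>h. g \<otimes> h \<otimes> inv g) ` Stab G act x"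
    and k: "k \<in> carrier G" "Stab G act z = (\<lambda>h. k \<otimes> h \<otimes> inv k) ` Stab G act y"
    using assms unfolding stab_conj_def by blast
  then have "Stab G act z = (\<lambda>h. (k \<otimes> g) \<otimes> h \<otimes> inv (k \<otimes> g)) ` Stab G act x"
    using conj_image_comp[OF k(1) g(1) Stab_subset] by simp
  then show ?thesis unfolding stab_conj_def using g k by (intro bexI[of _ "k \<otimes> g"]) auto
qed

lemma stab_conj_right_cong: "stab_conj y z \<Longrightarrow> stab_conj x z \<longleftrightarrow> stab_conj x y"
  using stab_conj_trans stab_conj_sym by blast

lemma stab_conj_act: "g \<in> carrier G \<Longrightarrow> y \<in> topspace X \<Longrightarrow> stab_conj y (act g y)"
  unfolding stab_conj_def using Stab_act by blast

lemma stab_conj_nbhd: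
  assumes S: "x \<in> S" "constant_slice G TG X act S (Stab G act x)"
  obtains W where "openin X W" "x \<in> W" "\<And>y. y \<in> W \<Longrightarrow> stab_conj x y"
proof -
  obtain U sec where "slice_chart G TG X act S (Stab G act x) U sec"
    using slice_chart_of_constant_slice[OF S(2)] .
  then interpret sl: slice_chart G TG X act S "Stab G act x" U sec .
  show ?thesis
    by (rule that[OF sl.openin_GS]) (use S(1) sl.slice_subset_GS sl.Stab_GS stab_conj_def in auto)
qed

lemma openin_stab_conj_class:
  assumes slices: "\<forall>x\<in>topspace X. \<exists>S. x \<in> S \<and> constant_slice G TG X act S (Stab G act x)"
  shows "openin X {y \<in> topspace X. stab_conj x0 y = P}"
proof (rule openin_subopen[THEN iffD2], intro ballI)
  fix y assume y: "y \<in> {y \<in> topspace X. stab_conj x0 y = P}"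
  obtain S where S: "y \<in> S" "constant_slice G TG X act S (Stab G act y)" using slices y by blast
  obtain W where W: "openin X W" "y \<in> W" "\<And>z. z \<in> W \<Longrightarrow> stab_conj y z"
    using stab_conj_nbhd[OF S] by blast
  have "stab_conj x0 z = P" if "z \<in> W" for z
    using stab_conj_right_cong[OF W(3)[OF that]] y by simp
  then have "W \<subseteq> {y \<in> topspace X. stab_conj x0 y = P}" using openin_subset[OF W(1)] by blast
  then show "\<exists>T. openin X T \<and> y \<in> T \<and> T \<subseteq> {y \<in> topspace X. stab_conj x0 y = P}"
    using W by blast
qed

lemma stab_conj_orbit_cong:
  assumes y: "y \<in> topspace X" and z: "z \<in> topspace X" and orb: "orbit G act y = orbit G act z"
  shows "stab_conj x0 y \<longleftrightarrow> stab_conj x0 z"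
proof -
  obtain g where "g \<in> carrier G" "y = act g z" using z y orb[symmetric] orbit_eq_iff by blast
  then have "stab_conj z y" using stab_conj_act z by simp
  then show ?thesis by (rule stab_conj_right_cong)
qed

lemma stab_conj_all:
  assumes conn: "connected_space (orbit_space G X act)"
    and slices: "\<forall>x\<in>topspace X. \<exists>S. x \<in> S \<and> constant_slice G TG X act S (Stab G act x)"
    and x0: "x0 \<in> topspace X" and y0: "y0 \<in> topspace X"
  shows "stab_conj x0 y0"
proof (rule ccontr)
  assume ny: "\<not> stab_conj x0 y0"
  define A where "A = {y \<in> topspace X. stab_conj x0 y}"
  define B where "B = {y \<in> topspace X. \<not> stab_conj x0 y}"
  have "openin (orbit_space G X act) (orbit G act ` A)" "openin (orbit_space G X act) (orbit G act ` B)"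
    unfolding A_def B_def
    using openin_orbit_image openin_stab_conj_class[OF slices, of x0 True]
      openin_stab_conj_class[OF slices, of x0 False] by simp_all
  moreover have "topspace (orbit_space G X act) \<subseteq> orbit G act ` A \<union> orbit G act ` B"
    unfolding topspace_orbit_space A_def B_def by auto
  moreover have "orbit G act ` A \<inter> orbit G act ` B = {}"
    using stab_conj_orbit_cong[of _ _ x0] unfolding A_def B_def by auto
  moreover have "orbit G act ` A \<noteq> {}" "orbit G act ` B \<noteq> {}"
    using x0 y0 ny stab_conj_refl unfolding A_def B_def by auto
  ultimately show False using conn unfolding connected_space_def by blast
qed

end

section \<open>Local triviality of the comparison map\<close>

lemma comparison_map_orbit:
  "comparison_map (orbit G (diag_action aE act) (e, x)) = orbit G act x"
  unfolding comparison_map_def orbit_def diag_action_def by (auto simp: image_iff)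

lemma continuous_map_comparison_map:
  assumes "top_action G TG X act"
  shows "continuous_map (homotopy_quotient G EG aE X act) (orbit_space G X act) comparison_map"
proof -
  interpret A: top_action G TG X act by fact
  have "continuous_map (prod_topology EG X) (orbit_space G X act) (\<lambda>p. orbit G act (snd p))"
    by (rule continuous_map_compose'[OF continuous_map_snd A.continuous_map_orbit])
  then have "continuous_map (prod_topology EG X) (orbit_space G X act)
               (comparison_map \<circ> orbit G (diag_action aE act))"
    by (rule continuous_map_eq) (auto simp: comparison_map_orbit)
  then show ?thesis
    unfolding homotopy_quotient_def orbit_space_def[of G "prod_topology EG X"]
    using continuous_compose_quotient_map[OF quotient_map_quotient_topology] by blast
qed

lemma comparison_map_surjective:
  assumes "topspace EG \<noteq> {}"
  shows "comparison_map ` topspace (homotopy_quotient G EG aE X act) = topspace (orbit_space G X act)"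
proof -
  obtain e0 where "e0 \<in> topspace EG" using assms by blast
  then show ?thesis
    unfolding homotopy_quotient_def orbit_space_def topspace_quotient_topology image_image
    by (force simp: topspace_prod_topology comparison_map_orbit image_iff)
qed

text \<open>Over GS the trivialisation sends the orbit of (e, g s), s \<in> S, to the orbit of s and the
  \<Gamma>0-orbit of k\<inverse> g\<inverse> e; conjugation by k identifies \<Gamma>-orbits with \<Gamma>0-orbits.\<close>

locale comparison_chart = slice_chart G TG X act S \<Gamma> U sec + E: top_action G TG EG aE
  for G (structure) and TG :: "'g topology" and X :: "'x topology" and act S \<Gamma> U sec
    and EG :: "'e topology" and aE +
  fixes \<Gamma>0 :: "'g set" and k :: 'g
  assumes subgroup0: "subgroup \<Gamma>0 G"
    and k: "k \<in> carrier G"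
    and \<Gamma>_conj: "\<Gamma> = (\<lambda>h. k \<otimes> h \<otimes> inv k) ` \<Gamma>0"
begin

sublocale F: top_action "subgrp G \<Gamma>0" "subtopology TG \<Gamma>0" EG aE
  by (rule E.top_action_subgroup[OF subgroup0])

sublocale D: top_action G TG "prod_topology EG X" "diag_action aE act"
  by (rule top_action_diag) unfold_locales

abbreviation "BX \<equiv> orbit_space G X act"
abbreviation "Fib \<equiv> orbit_space (subgrp G \<Gamma>0) EG aE"
abbreviation "Y \<equiv> homotopy_quotient G EG aE X act"

definition "qF = orbit (subgrp G \<Gamma>0) aE"
definition "qY = orbit G (diag_action aE act)"
definition "ob = orbit G act"
definition "slice_point b = (SOME s. s \<in> S \<and> s \<in> b)"
definition "slice_elem x = (SOME g. g \<in> carrier G \<and> x = act g (slice_point (ob x)))"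
definition "triv0 p = (ob (slice_point (ob (snd p))), qF (aE (inv k \<otimes> inv (slice_elem (snd p))) (fst p)))"
definition "triv C = triv0 (SOME p. p \<in> C)"
definition "triv_inv bf = qY (aE k (SOME e. e \<in> snd bf), slice_point (fst bf))"
definition "UB = ob ` GS"
definition "UY = {C \<in> topspace Y. comparison_map C \<in> UB}"

lemma \<Gamma>0_subset: "\<Gamma>0 \<subseteq> carrier G"
  using subgroup0 by (rule subgroup.subset)

lemma conj_to_\<Gamma>0: assumes "\<delta> \<in> \<Gamma>" shows "inv k \<otimes> \<delta> \<otimes> k \<in> \<Gamma>0"
proof -
  obtain d where d: "d \<in> \<Gamma>0" "\<delta> = k \<otimes> d \<otimes> inv k" using assms \<Gamma>_conj by auto
  have "d \<in> carrier G" using d \<Gamma>0_subset by auto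
  then have "inv k \<otimes> \<delta> \<otimes> k = d"
    using d(2) k by (simp add: m_assoc) (simp add: m_assoc[symmetric])
  then show ?thesis using d by simp
qed

lemma qF_act: "d \<in> \<Gamma>0 \<Longrightarrow> e \<in> topspace EG \<Longrightarrow> qF (aE d e) = qF e"
  unfolding qF_def using F.orbit_act by simp

lemma diag_action_pair: "diag_action aE act h (e, x) = (aE h e, act h x)"
  by (simp add: diag_action_def)

lemma qY_act:
  "h \<in> carrier G \<Longrightarrow> e \<in> topspace EG \<Longrightarrow> x \<in> topspace X \<Longrightarrow> qY (aE h e, act h x) = qY (e, x)"
  unfolding qY_def using D.orbit_act[of h "(e, x)"] by (simp add: diag_action_pair topspace_prod_topology)

lemma mem_qY: "p \<in> qY (e, x) \<longleftrightarrow> (\<exists>h\<in>carrier G. p = (aE h e, act h x))"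
  unfolding qY_def D.mem_orbit_iff by (simp add: diag_action_pair)

lemma comparison_map_qY: "comparison_map (qY (e, x)) = ob x"
  unfolding qY_def ob_def by (rule comparison_map_orbit)

lemma slice_point_eq:
  assumes g: "g \<in> carrier G" and s: "s \<in> S"
  shows "slice_point (ob (act g s)) = s"
proof -
  have sX: "s \<in> topspace X" using s S_subset by auto
  have "s \<in> ob (act g s)" unfolding ob_def mem_orbit_iff using g sX
    by (metis act_inv_act inv_closed)
  then have "\<exists>s'. s' \<in> S \<and> s' \<in> ob (act g s)" using s by blast
  then have s': "slice_point (ob (act g s)) \<in> S" "slice_point (ob (act g s)) \<in> ob (act g s)"
    unfolding slice_point_def by (metis (mono_tags, lifting) someI_ex)+
  then obtain h where h: "h \<in> carrier G" "slice_point (ob (act g s)) = act h (act g s)"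
    unfolding ob_def mem_orbit_iff by blast
  then have "act (h \<otimes> g) s = act \<one> (slice_point (ob (act g s)))"
    using g sX s'(1) S_subset act_mult act_one by auto
  from act_slice_eq(1)[OF m_closed[OF h(1) g] one_closed s s'(1) this] show ?thesis by simp
qed

lemma slice_elem:
  assumes g: "g \<in> carrier G" and s: "s \<in> S"
  shows "slice_elem (act g s) \<in> carrier G" "act g s = act (slice_elem (act g s)) s"
    "inv (slice_elem (act g s)) \<otimes> g \<in> \<Gamma>"
proof -
  have "\<exists>g'. g' \<in> carrier G \<and> act g s = act g' (slice_point (ob (act g s)))"
    using slice_point_eq[OF assms] g by auto
  then have "slice_elem (act g s) \<in> carrier G \<and> act g s = act (slice_elem (act g s)) (slice_point (ob (act g s)))"
    unfolding slice_elem_def by (rule someI_ex)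
  then show gc: "slice_elem (act g s) \<in> carrier G" and eq: "act g s = act (slice_elem (act g s)) s"
    using slice_point_eq[OF assms] by auto
  show "inv (slice_elem (act g s)) \<otimes> g \<in> \<Gamma>" using act_slice_eq(2)[OF g gc s s eq] .
qed

lemma triv0_eq:
  assumes g: "g \<in> carrier G" and s: "s \<in> S" and e: "e \<in> topspace EG"
  shows "triv0 (e, act g s) = (ob s, qF (aE (inv k \<otimes> inv g) e))"
proof -
  define g' where "g' = slice_elem (act g s)"
  have g': "g' \<in> carrier G" "inv g' \<otimes> g \<in> \<Gamma>" using slice_elem[OF g s] unfolding g'_def by auto
  define d where "d = inv k \<otimes> (inv g' \<otimes> g) \<otimes> k"
  have d: "d \<in> \<Gamma>0" using conj_to_\<Gamma>0[OF g'(2)] d_def by simp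
  have "inv k \<otimes> inv g' = d \<otimes> (inv k \<otimes> inv g)"
    unfolding d_def using g g' k by (simp add: m_assoc) (simp add: m_assoc[symmetric])
  then have "aE (inv k \<otimes> inv g') e = aE d (aE (inv k \<otimes> inv g) e)"
    using d \<Gamma>0_subset g g' k e by (simp add: E.act_mult subsetD)
  then have "qF (aE (inv k \<otimes> inv g') e) = qF (aE (inv k \<otimes> inv g) e)"
    using qF_act[OF d] E.act_closed g k e by simp
  then show ?thesis unfolding triv0_def using slice_point_eq[OF g s] g'_def by (simp add: ob_def)
qed

lemma triv_qY:
  assumes e: "e \<in> topspace EG" and x: "x \<in> GS"
  shows "triv (qY (e, x)) = triv0 (e, x)"
proof -
  obtain g s where gs: "g \<in> carrier G" "s \<in> S" "x = act g s" using x unfolding mem_GS by blast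
  have "(e, x) = (aE \<one> e, act \<one> x)" using e x GS_subset act_one E.act_one by auto
  then have "(e, x) \<in> qY (e, x)" unfolding mem_qY by blast
  then have "(SOME p. p \<in> qY (e, x)) \<in> qY (e, x)" by (rule someI)
  then obtain h where h: "h \<in> carrier G" "(SOME p. p \<in> qY (e, x)) = (aE h e, act h x)"
    unfolding mem_qY by blast
  have "act h x = act (h \<otimes> g) s" using h gs S_subset act_mult by auto
  then have "triv (qY (e, x)) = (ob s, qF (aE (inv k \<otimes> inv (h \<otimes> g)) (aE h e)))"
    unfolding triv_def h(2) using triv0_eq[of "h \<otimes> g" s "aE h e"] h gs e E.act_closed by simp
  also have "aE (inv k \<otimes> inv (h \<otimes> g)) (aE h e) = aE (inv k \<otimes> inv g) e"
  proof -
    have "inv k \<otimes> inv (h \<otimes> g) \<otimes> h = inv k \<otimes> inv g"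
      using h gs k by (simp add: inv_mult_group m_assoc)
    moreover have "inv k \<otimes> inv (h \<otimes> g) \<in> carrier G" using h gs k by simp
    ultimately show ?thesis using E.act_mult[of "inv k \<otimes> inv (h \<otimes> g)" h e] h e by simp
  qed
  finally show ?thesis using triv0_eq[OF gs(1,2) e] gs(3) by simp
qed

lemma mem_UB: "b \<in> UB \<longleftrightarrow> (\<exists>s\<in>S. b = ob s)"
proof
  assume "b \<in> UB"
  then obtain x where "x \<in> GS" "b = ob x" unfolding UB_def by blast
  moreover obtain g s where "g \<in> carrier G" "s \<in> S" "x = act g s" using \<open>x \<in> GS\<close> unfolding mem_GS by blast
  ultimately show "\<exists>s\<in>S. b = ob s" unfolding ob_def using orbit_act S_subset by auto
next
  assume "\<exists>s\<in>S. b = ob s"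
  then show "b \<in> UB" unfolding UB_def using slice_subset_GS by auto
qed

lemma slice_point_UB: assumes "b \<in> UB" shows "slice_point b \<in> S" "b = ob (slice_point b)"
proof -
  obtain s where s: "s \<in> S" "b = ob s" using assms mem_UB by auto
  have "slice_point b = s" using slice_point_eq[of \<one> s] s act_one S_subset by auto
  then show "slice_point b \<in> S" "b = ob (slice_point b)" using s by auto
qed

lemma triv_inv_qF:
  assumes b: "b \<in> UB" and e: "e \<in> topspace EG"
  shows "triv_inv (b, qF e) = qY (aE k e, slice_point b)"
proof -
  have "e \<in> qF e" using F.orbit_self[OF e] unfolding qF_def .
  then have "(SOME e'. e' \<in> qF e) \<in> qF e" by (rule someI)
  then obtain d where d: "d \<in> \<Gamma>0" "(SOME e'. e' \<in> qF e) = aE d e"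
    unfolding qF_def F.mem_orbit_iff by auto
  have dc: "d \<in> carrier G" using d \<Gamma>0_subset by auto
  define \<gamma> where "\<gamma> = k \<otimes> d \<otimes> inv k"
  have \<gamma>: "\<gamma> \<in> \<Gamma>" "\<gamma> \<in> carrier G" using \<Gamma>_conj d k dc unfolding \<gamma>_def by auto
  have "aE k (aE d e) = aE (k \<otimes> d) e" using E.act_mult k dc e by simp
  also have "k \<otimes> d = \<gamma> \<otimes> k" unfolding \<gamma>_def using k dc by (simp add: m_assoc)
  also have "aE (\<gamma> \<otimes> k) e = aE \<gamma> (aE k e)" using E.act_mult \<gamma> k e by simp
  finally have "aE k (aE d e) = aE \<gamma> (aE k e)" .
  moreover have sb: "slice_point b \<in> S" using slice_point_UB[OF b] by simp
  moreover have "act \<gamma> (slice_point b) = slice_point b" using slice_fixed[OF \<gamma>(1) sb] .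
  ultimately have "triv_inv (b, qF e) = qY (aE \<gamma> (aE k e), act \<gamma> (slice_point b))"
    unfolding triv_inv_def using d by simp
  also have "\<dots> = qY (aE k e, slice_point b)"
    using qY_act \<gamma> E.act_closed k e sb S_subset by auto
  finally show ?thesis .
qed

lemma topspace_Y: "topspace Y = qY ` (topspace EG \<times> topspace X)"
  unfolding homotopy_quotient_def qY_def D.topspace_orbit_space by (simp add: topspace_prod_topology)

lemma UY_eq: "UY = qY ` (topspace EG \<times> GS)"
proof (intro equalityI subsetI)
  fix C assume "C \<in> UY"
  then obtain e x where ex: "e \<in> topspace EG" "x \<in> topspace X" "C = qY (e, x)" "ob x \<in> UB"
    unfolding UY_def topspace_Y by (auto simp: comparison_map_qY)
  then have "x \<in> GS" using GS_saturated unfolding UB_def ob_def by blast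
  then show "C \<in> qY ` (topspace EG \<times> GS)" using ex by auto
next
  fix C assume "C \<in> qY ` (topspace EG \<times> GS)"
  then show "C \<in> UY"
    unfolding UY_def topspace_Y UB_def using GS_subset by (auto simp: comparison_map_qY)
qed

lemma triv_inv_triv: assumes C: "C \<in> UY" shows "triv_inv (triv C) = C" "fst (triv C) = comparison_map C"
proof -
  obtain e x where ex: "e \<in> topspace EG" "x \<in> GS" "C = qY (e, x)"
    using C unfolding UY_eq by blast
  then obtain g s where gs: "g \<in> carrier G" "s \<in> S" "x = act g s" unfolding mem_GS by blast
  have sX: "s \<in> topspace X" using gs S_subset by auto
  have tr: "triv C = (ob s, qF (aE (inv k \<otimes> inv g) e))"
    using triv_qY[OF ex(1,2)] triv0_eq[OF gs(1,2) ex(1)] ex(3) gs(3) by simp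
  have "ob s \<in> UB" "slice_point (ob s) = s"
    using mem_UB gs(2) slice_point_eq[of \<one> s] act_one sX by auto
  then have "triv_inv (triv C) = qY (aE k (aE (inv k \<otimes> inv g) e), s)"
    using triv_inv_qF[of "ob s" "aE (inv k \<otimes> inv g) e"] ex(1) gs(1) k E.act_closed tr by simp
  also have "aE k (aE (inv k \<otimes> inv g) e) = aE (inv g) e"
    using E.act_mult[of k "inv k \<otimes> inv g" e] ex(1) gs(1) k by (simp add: m_assoc[symmetric])
  also have "qY (aE (inv g) e, s) = C"
    using qY_act[of "inv g" e "act g s"] ex gs sX act_inv_act act_closed by simp
  finally show "triv_inv (triv C) = C" .
  show "fst (triv C) = comparison_map C"
    using tr ex gs sX comparison_map_qY orbit_act unfolding ob_def by simp
qed

lemma triv_triv_inv: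
  assumes b: "b \<in> UB" and f: "f \<in> topspace Fib"
  shows "triv (triv_inv (b, f)) = (b, f)"
proof -
  obtain e where e: "e \<in> topspace EG" "f = qF e"
    using f unfolding F.topspace_orbit_space qF_def by auto
  have sb: "slice_point b \<in> S" "b = ob (slice_point b)" using slice_point_UB[OF b] by auto
  have sX: "slice_point b \<in> topspace X" "slice_point b \<in> GS"
    using sb(1) S_subset slice_subset_GS by auto
  have "triv (triv_inv (b, f)) = triv0 (aE k e, act \<one> (slice_point b))"
    using triv_inv_qF[OF b e(1)] triv_qY[of "aE k e" "slice_point b"] e k sX
      E.act_closed act_one by auto
  also have "\<dots> = (b, f)"
    using triv0_eq[of \<one> "slice_point b" "aE k e"] sb e k E.act_closed E.act_inv_act by simp
  finally show ?thesis .
qed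

lemma openin_subtopology_GS:
  assumes "N \<subseteq> GS" "openin X N"
  shows "openin (subtopology X GS) N" "subtopology (subtopology X GS) N = subtopology X N"
  using assms openin_open_subtopology[OF openin_GS] by (auto simp: subtopology_subtopology Int_absorb1)

lemma continuous_map_slice_point_GS:
  "continuous_map (subtopology X GS) (subtopology X S) (\<lambda>x. slice_point (ob x))"
proof (rule continuous_map_locally)
  fix x1 assume "x1 \<in> topspace (subtopology X GS)"
  then have "x1 \<in> GS" by simp
  then obtain N cN sN g1 where N: "openin X N" "x1 \<in> N" "N \<subseteq> GS" "g1 \<in> carrier G"
    "continuous_map (subtopology X N) (subtopology (coset_space G TG \<Gamma>) U) cN"
    "continuous_map (subtopology X N) (subtopology X S) sN"
    "\<And>x. x \<in> N \<Longrightarrow> cN x \<in> U \<and> sN x \<in> S \<and> x = act (g1 \<otimes> sec (cN x)) (sN x)"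
    by (rule local_slice_coordinates) blast
  have "continuous_map (subtopology X N) (subtopology X S) (\<lambda>x. slice_point (ob x))"
  proof (rule continuous_map_eq[OF N(6)])
    fix x assume "x \<in> topspace (subtopology X N)"
    then have x: "cN x \<in> U" "sN x \<in> S" "x = act (g1 \<otimes> sec (cN x)) (sN x)" using N(7) by auto
    then show "sN x = slice_point (ob x)"
      using slice_point_eq[of "g1 \<otimes> sec (cN x)" "sN x"] N(4) sec_closed by simp
  qed
  then show "\<exists>T. openin (subtopology X GS) T \<and> x1 \<in> T \<and>
              continuous_map (subtopology (subtopology X GS) T) (subtopology X S) (\<lambda>x. slice_point (ob x))"
    using openin_subtopology_GS[OF N(3,1)] N(2) by auto
qed

lemma continuous_map_slice_point: "continuous_map (subtopology BX UB) (subtopology X S) slice_point"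
  unfolding UB_def ob_def orbit_space_def
proof (rule continuous_map_from_quotient_topology_on_saturated[OF openin_GS])
  show "\<And>x. x \<in> topspace X \<Longrightarrow> orbit G act x \<in> orbit G act ` GS \<Longrightarrow> x \<in> GS"
    by (rule GS_saturated)
  show "continuous_map (subtopology X GS) (subtopology X S) (slice_point \<circ> orbit G act)"
    using continuous_map_slice_point_GS by (simp add: ob_def o_def)
qed

lemma continuous_map_triv0_local:
  assumes N: "N \<subseteq> GS" "g1 \<in> carrier G"
    "continuous_map (subtopology X N) (subtopology (coset_space G TG \<Gamma>) U) cN"
    "continuous_map (subtopology X N) (subtopology X S) sN"
    "\<And>x. x \<in> N \<Longrightarrow> cN x \<in> U \<and> sN x \<in> S \<and> x = act (g1 \<otimes> sec (cN x)) (sN x)"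
  shows "continuous_map (prod_topology EG (subtopology X N)) (prod_topology (subtopology BX UB) Fib) triv0"
proof -
  let ?Z = "prod_topology EG (subtopology X N)"
  have s: "continuous_map ?Z X (\<lambda>p. sN (snd p))"
    by (rule continuous_map_into_fulltopology, rule continuous_map_compose'[OF continuous_map_snd N(4)])
  have b: "continuous_map ?Z (subtopology BX UB) (\<lambda>p. ob (sN (snd p)))"
    unfolding continuous_map_in_subtopology
  proof
    show "continuous_map ?Z BX (\<lambda>p. ob (sN (snd p)))"
      unfolding ob_def by (rule continuous_map_compose'[OF s continuous_map_orbit])
    show "(\<lambda>p. ob (sN (snd p))) \<in> topspace ?Z \<rightarrow> UB"
    proof
      fix p assume "p \<in> topspace ?Z"
      then have "sN (snd p) \<in> GS" using N(5) slice_subset_GS by (auto simp: topspace_prod_topology)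
      then show "ob (sN (snd p)) \<in> UB" unfolding UB_def by blast
    qed
  qed
  have "continuous_map ?Z TG (\<lambda>p. sec (cN (snd p)))"
    by (rule continuous_map_compose'[OF continuous_map_compose'[OF continuous_map_snd N(3)] continuous_map_sec])
  then have "continuous_map ?Z TG (\<lambda>p. inv k \<otimes> inv (g1 \<otimes> sec (cN (snd p))))"
    by (intro continuous_map_mult_paired[OF continuous_map_const_group[OF inv_closed[OF k]]]
        continuous_map_inv_of continuous_map_mult_paired[OF continuous_map_const_group[OF N(2)]])
  then have f: "continuous_map ?Z Fib (\<lambda>p. qF (aE (inv k \<otimes> inv (g1 \<otimes> sec (cN (snd p)))) (fst p)))"
    unfolding qF_def
    by (rule continuous_map_compose'[OF E.continuous_map_act_paired[OF _ continuous_map_fst] F.continuous_map_orbit])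
  show ?thesis
  proof (rule continuous_map_eq[OF continuous_map_pairedI[OF b f]])
    fix p assume "p \<in> topspace ?Z"
    then have p: "fst p \<in> topspace EG" "snd p \<in> N" by (auto simp: topspace_prod_topology)
    show "(ob (sN (snd p)), qF (aE (inv k \<otimes> inv (g1 \<otimes> sec (cN (snd p)))) (fst p))) = triv0 p"
      using triv0_eq[of "g1 \<otimes> sec (cN (snd p))" "sN (snd p)" "fst p"] N(2) N(5)[OF p(2)] sec_closed p(1)
      by (simp add: prod_eq_iff)
  qed
qed

lemma continuous_map_triv0:
  "continuous_map (prod_topology EG (subtopology X GS)) (prod_topology (subtopology BX UB) Fib) triv0"
proof (rule continuous_map_locally)
  fix p1 assume p1: "p1 \<in> topspace (prod_topology EG (subtopology X GS))"
  then have "snd p1 \<in> GS" by (auto simp: topspace_prod_topology)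
  then obtain N cN sN g1 where N: "openin X N" "snd p1 \<in> N" "N \<subseteq> GS" "g1 \<in> carrier G"
    "continuous_map (subtopology X N) (subtopology (coset_space G TG \<Gamma>) U) cN"
    "continuous_map (subtopology X N) (subtopology X S) sN"
    "\<And>x. x \<in> N \<Longrightarrow> cN x \<in> U \<and> sN x \<in> S \<and> x = act (g1 \<otimes> sec (cN x)) (sN x)"
    by (rule local_slice_coordinates) blast
  have "openin (prod_topology EG (subtopology X GS)) (topspace EG \<times> N)"
    using openin_subtopology_GS[OF N(3,1)] by (simp add: openin_prod_Times_iff)
  moreover have "subtopology (prod_topology EG (subtopology X GS)) (topspace EG \<times> N) = prod_topology EG (subtopology X N)"
    using openin_subtopology_GS[OF N(3,1)] by (simp add: subtopology_Times)
  ultimately show "\<exists>T. openin (prod_topology EG (subtopology X GS)) T \<and> p1 \<in> T \<and>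
      continuous_map (subtopology (prod_topology EG (subtopology X GS)) T) (prod_topology (subtopology BX UB) Fib) triv0"
    using p1 N(2) continuous_map_triv0_local[OF N(3-7)]
    by (intro exI[of _ "topspace EG \<times> N"]) (auto simp: topspace_prod_topology mem_Times_iff)
qed

lemma EG_times_GS_saturated:
  assumes p: "p \<in> topspace (prod_topology EG X)" and q: "qY p \<in> qY ` (topspace EG \<times> GS)"
  shows "p \<in> topspace EG \<times> GS"
proof -
  obtain e x where ex: "p = (e, x)" "e \<in> topspace EG" "x \<in> topspace X"
    using p by (auto simp: topspace_prod_topology)
  obtain e' x' where "x' \<in> GS" "qY (e, x) = qY (e', x')" using q ex by auto
  then have "ob x \<in> ob ` GS" using comparison_map_qY[of e x] comparison_map_qY[of e' x'] by auto
  then show ?thesis using GS_saturated ex unfolding ob_def by auto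
qed

lemma continuous_map_triv: "continuous_map (subtopology Y UY) (prod_topology (subtopology BX UB) Fib) triv"
  unfolding UY_eq homotopy_quotient_def orbit_space_def[of G "prod_topology EG X"] qY_def[symmetric]
proof (rule continuous_map_from_quotient_topology_on_saturated[OF _ EG_times_GS_saturated])
  show "openin (prod_topology EG X) (topspace EG \<times> GS)"
    using openin_GS by (simp add: openin_prod_Times_iff)
  have "subtopology (prod_topology EG X) (topspace EG \<times> GS) = prod_topology EG (subtopology X GS)"
    by (simp add: subtopology_Times)
  moreover have "continuous_map (prod_topology EG (subtopology X GS)) (prod_topology (subtopology BX UB) Fib) (triv \<circ> qY)"
    by (rule continuous_map_eq[OF continuous_map_triv0]) (auto simp: topspace_prod_topology triv_qY)
  ultimately show "continuous_map (subtopology (prod_topology EG X) (topspace EG \<times> GS))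
          (prod_topology (subtopology BX UB) Fib) (triv \<circ> qY)"
    by simp
qed

lemma continuous_map_triv_inv:
  "continuous_map (prod_topology (subtopology BX UB) Fib) (subtopology Y UY) triv_inv"
proof (rule continuous_compose_quotient_map[OF quotient_map_prod_right_open])
  show "continuous_map EG Fib qF" "open_map EG Fib qF" "qF ` topspace EG = topspace Fib"
    unfolding qF_def
    by (rule F.continuous_map_orbit, rule F.open_map_orbit, rule F.topspace_orbit_space[symmetric])
  let ?Z = "prod_topology (subtopology BX UB) EG"
  have "continuous_map ?Z (prod_topology EG X) (\<lambda>p. (aE k (snd p), slice_point (fst p)))"
    by (rule continuous_map_pairedI[OF continuous_map_compose'[OF continuous_map_snd E.continuous_map_act[OF k]]
          continuous_map_into_fulltopology[OF continuous_map_compose'[OF continuous_map_fst continuous_map_slice_point]]])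
  then have "continuous_map ?Z Y (\<lambda>p. qY (aE k (snd p), slice_point (fst p)))"
    unfolding qY_def homotopy_quotient_def by (rule continuous_map_compose'[OF _ D.continuous_map_orbit])
  moreover have "(\<lambda>p. qY (aE k (snd p), slice_point (fst p))) \<in> topspace ?Z \<rightarrow> UY"
  proof
    fix p assume "p \<in> topspace ?Z"
    then have "(aE k (snd p), slice_point (fst p)) \<in> topspace EG \<times> GS"
      using E.act_closed k slice_point_UB slice_subset_GS by (auto simp: topspace_prod_topology)
    then show "qY (aE k (snd p), slice_point (fst p)) \<in> UY" unfolding UY_eq by blast
  qed
  ultimately have "continuous_map ?Z (subtopology Y UY) (\<lambda>p. qY (aE k (snd p), slice_point (fst p)))"
    by (simp add: continuous_map_in_subtopology)
  then show "continuous_map ?Z (subtopology Y UY) (triv_inv \<circ> (\<lambda>(z, x). (z, qF x)))"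
    by (rule continuous_map_eq) (auto simp: topspace_prod_topology triv_inv_qF)
qed

lemma comparison_map_local_triviality:
  "openin BX UB \<and>
   homeomorphic_map (subtopology Y {y \<in> topspace Y. comparison_map y \<in> UB})
      (prod_topology (subtopology BX UB) Fib) triv \<and>
   (\<forall>y\<in>topspace Y. comparison_map y \<in> UB \<longrightarrow> fst (triv y) = comparison_map y)"
proof (intro conjI)
  show "openin BX UB" unfolding UB_def ob_def by (rule openin_orbit_image[OF openin_GS])
  have "UB \<subseteq> topspace BX" unfolding UB_def topspace_orbit_space ob_def using GS_subset by auto
  then have "homeomorphic_maps (subtopology Y UY) (prod_topology (subtopology BX UB) Fib) triv triv_inv"
    unfolding homeomorphic_maps_def using continuous_map_triv continuous_map_triv_inv
      triv_inv_triv(1) triv_triv_inv by (auto simp: topspace_prod_topology UY_def)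
  then show "homeomorphic_map (subtopology Y {y \<in> topspace Y. comparison_map y \<in> UB})
      (prod_topology (subtopology BX UB) Fib) triv"
    unfolding UY_def[symmetric] by (rule homeomorphic_maps_imp_map)
  show "\<forall>y\<in>topspace Y. comparison_map y \<in> UB \<longrightarrow> fst (triv y) = comparison_map y"
    using triv_inv_triv(2) unfolding UY_def by blast
qed

end


lemma fibre_bundle_comparison_map:
  assumes U: "universal_bundle G TG EG aE" and A: "top_action G TG X act" and x0: "x0 \<in> topspace X"
    and slices: "\<forall>x\<in>topspace X. \<exists>S. x \<in> S \<and> constant_slice G TG X act S (Stab G act x)"
    and conj: "\<forall>y\<in>topspace X. \<exists>k\<in>carrier G. Stab G act y = (\<lambda>h. k \<otimes>\<^bsub>G\<^esub> h \<otimes>\<^bsub>G\<^esub> inv\<^bsub>G\<^esub> k) ` Stab G act x0"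
  shows "fibre_bundle (homotopy_quotient G EG aE X act) (orbit_space G X act) comparison_map
           (orbit_space (subgrp G (Stab G act x0)) EG aE)"
proof -
  interpret A: top_action G TG X act by fact
  have ne: "topspace EG \<noteq> {}" and pb: "principal_bundle G TG EG aE (orbit_space G EG aE) (orbit G aE)"
    using U unfolding universal_bundle_def by auto
  have E: "top_action G TG EG aE"
    using pb unfolding principal_bundle_def top_action_def by blast
  show ?thesis
    unfolding fibre_bundle_def
  proof (intro conjI ballI)
    show "continuous_map (homotopy_quotient G EG aE X act) (orbit_space G X act) comparison_map"
      using A by (rule continuous_map_comparison_map)
    show "comparison_map ` topspace (homotopy_quotient G EG aE X act) = topspace (orbit_space G X act)"
      using ne by (rule comparison_map_surjective)
    fix b assume "b \<in> topspace (orbit_space G X act)"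
    then obtain y where y: "y \<in> topspace X" "b = orbit G act y" unfolding A.topspace_orbit_space by blast
    obtain S where S: "y \<in> S" "constant_slice G TG X act S (Stab G act y)" using slices y(1) by blast
    obtain k where k: "k \<in> carrier G" "Stab G act y = (\<lambda>h. k \<otimes>\<^bsub>G\<^esub> h \<otimes>\<^bsub>G\<^esub> inv\<^bsub>G\<^esub> k) ` Stab G act x0"
      using conj y(1) by blast
    obtain U sec where "slice_chart G TG X act S (Stab G act y) U sec"
      using A.slice_chart_of_constant_slice[OF S(2)] .
    then interpret C: comparison_chart G TG X act S "Stab G act y" U sec EG aE "Stab G act x0" k
      unfolding comparison_chart_def comparison_chart_axioms_def using E k A.Stab_subgroup[OF x0] by simp
    have "b \<in> C.UB" unfolding C.UB_def C.ob_def using y S(1) C.slice_subset_GS by auto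
    then show "\<exists>U \<phi>. openin (orbit_space G X act) U \<and> b \<in> U \<and>
        homeomorphic_map (subtopology (homotopy_quotient G EG aE X act)
            {y \<in> topspace (homotopy_quotient G EG aE X act). comparison_map y \<in> U})
          (prod_topology (subtopology (orbit_space G X act) U) (orbit_space (subgrp G (Stab G act x0)) EG aE)) \<phi> \<and>
        (\<forall>y\<in>topspace (homotopy_quotient G EG aE X act). comparison_map y \<in> U \<longrightarrow> fst (\<phi> y) = comparison_map y)"
      using C.comparison_map_local_triviality by blast
  qed
qed

theorem theorem3p4:
  fixes G :: "'g monoid" and TG :: "'g topology"
    and X :: "'x topology" and act :: "'g \<Rightarrow> 'x \<Rightarrow> 'x"
  assumes action: "continuous_action G TG X act"
    and conn: "connected_space (orbit_space G X act)"
    and slices: "\<forall>x\<in>topspace X. \<exists>S. x \<in> S \<and> constant_slice G TG X act S (Stab G act x)"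
  shows "(\<forall>x\<in>topspace X. \<forall>y\<in>topspace X. \<exists>g\<in>carrier G.
            Stab G act y = (\<lambda>h. g \<otimes>\<^bsub>G\<^esub> h \<otimes>\<^bsub>G\<^esub> inv\<^bsub>G\<^esub> g) ` Stab G act x)
       \<and> (\<forall>(EG :: 'e topology) aE. universal_bundle G TG EG aE \<longrightarrow>
            (\<forall>x\<in>topspace X. \<exists>F :: 'e set topology.
               classifying_space_model G TG (Stab G act x) F \<and>
               fibre_bundle (homotopy_quotient G EG aE X act) (orbit_space G X act)
                            comparison_map F))"
proof -
  interpret A: top_action G TG X act
    using action by unfold_locales
  have conj: "\<forall>x\<in>topspace X. \<forall>y\<in>topspace X. \<exists>g\<in>carrier G.
            Stab G act y = (\<lambda>h. g \<otimes>\<^bsub>G\<^esub> h \<otimes>\<^bsub>G\<^esub> inv\<^bsub>G\<^esub> g) ` Stab G act x"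
    using A.stab_conj_all[OF conn slices] unfolding A.stab_conj_def by blast
  have "classifying_space_model G TG (Stab G act x) (orbit_space (subgrp G (Stab G act x)) EG aE) \<and>
        fibre_bundle (homotopy_quotient G EG aE X act) (orbit_space G X act) comparison_map
           (orbit_space (subgrp G (Stab G act x)) EG aE)"
    if U: "universal_bundle G TG EG aE" and x: "x \<in> topspace X" for EG :: "'e topology" and aE x
  proof
    obtain S where "constant_slice G TG X act S (Stab G act x)" using slices x by blast
    then show "classifying_space_model G TG (Stab G act x) (orbit_space (subgrp G (Stab G act x)) EG aE)"
      unfolding constant_slice_def using classifying_space_model_of_slice[OF U] by blast
    show "fibre_bundle (homotopy_quotient G EG aE X act) (orbit_space G X act) comparison_map
           (orbit_space (subgrp G (Stab G act x)) EG aE)"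
      using fibre_bundle_comparison_map[OF U A.top_action_axioms x slices] conj x by blast
  qed
  with conj show ?thesis by blast
qed

end
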